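(* Let ${\mathcal G}=(B\cup W,E)$ be a finite bipartite graph embedded in the plane, each of whose bounded faces is bounded by a simple cycle, with vertex multiplicities $\mathbf n$, a choice of cilia, and a Kasteleyn sign function $\epsilon:E\to\{\pm1\}$ (definitions in the context). Let $\gamma$ be a simple closed cycle in ${\mathcal G}$ of length $L$ (number of edges). Then $$\prod_{e\in\gamma}\epsilon_e=(-1)^{L/2+1+k+n_{\mathrm{int}}},$$ where $k$ is the number of vertices $v$ on $\gamma$ with $n_v$ even whose cilium lies in the region enclosed by $\gamma$, and $n_{\mathrm{int}}=\sum n_v$ is the sum of the multiplicities of all vertices lying strictly inside the region enclosed by $\gamma$.
   Context: A vertex multiplicity is a function $\mathbf n:B\cup W\to\mathbb Z_{>0}$, $v\mapsto n_v$. A choice of cilia assigns to each vertex $v$ a cilium: a distinguished angular sector (wedge) at $v$ between two cyclically consecutive incident edges; the cilium of $v$ "lies in" the face containing that wedge. A Kasteleyn sign function is a map $\epsilon:E\to\{\pm1\}$ such that for every bounded face $f$ of ${\mathcal G}$, whose boundary has length $2\ell$, one has $\prod_{e\in\partial f}\epsilon_e=(-1)^{\ell+1+k_f}$, where $k_f$ is the number of vertices $v$ on $\partial f$ with $n_v$ even whose cilium lies in $f$. *)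

theory Defs
  imports "HOL-Analysis.Analysis"
begin

text \<open>It is embedded in the plane (identified with the complex numbers):
  vertex v is drawn at pos v, edge e is drawn as the arc g e from pos (bl e)
  to pos (wh e).\<close>

definition graph_set ::
  "'v set \<Rightarrow> 'e set \<Rightarrow> ('v \<Rightarrow> complex) \<Rightarrow> ('e \<Rightarrow> real \<Rightarrow> complex) \<Rightarrow> complex set" where
  "graph_set V E pos g = pos ` V \<union> (\<Union>e\<in>E. path_image (g e))"

definition plane_bipartite_graph ::
  "'v set \<Rightarrow> 'v set \<Rightarrow> 'e set \<Rightarrow> ('e \<Rightarrow> 'v) \<Rightarrow> ('e \<Rightarrow> 'v)
   \<Rightarrow> ('v \<Rightarrow> complex) \<Rightarrow> ('e \<Rightarrow> real \<Rightarrow> complex) \<Rightarrow> bool" where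
  "plane_bipartite_graph B W E bl wh pos g \<longleftrightarrow>
     finite B \<and> finite W \<and> finite E \<and> B \<inter> W = {} \<and>
     (\<forall>e\<in>E. bl e \<in> B \<and> wh e \<in> W) \<and>
     (\<forall>e\<in>E. \<forall>e'\<in>E. bl e = bl e' \<and> wh e = wh e' \<longrightarrow> e = e') \<and>
     inj_on pos (B \<union> W) \<and>
     (\<forall>e\<in>E. arc (g e) \<and> pathstart (g e) = pos (bl e) \<and> pathfinish (g e) = pos (wh e)) \<and>
     (\<forall>e\<in>E. \<forall>v\<in>B \<union> W. pos v \<in> path_image (g e) \<longrightarrow> v = bl e \<or> v = wh e) \<and>
     (\<forall>e\<in>E. \<forall>e'\<in>E. e \<noteq> e' \<longrightarrow>
        path_image (g e) \<inter> path_image (g e') \<subseteq> pos ` ({bl e, wh e} \<inter> {bl e', wh e'}))"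

definition simple_cycle ::
  "'e set \<Rightarrow> ('e \<Rightarrow> 'v) \<Rightarrow> ('e \<Rightarrow> 'v) \<Rightarrow> 'v list \<Rightarrow> 'e list \<Rightarrow> bool" where
  "simple_cycle E bl wh vs es \<longleftrightarrow>
     length vs = length es \<and> 2 \<le> length es \<and> distinct vs \<and> distinct es \<and> set es \<subseteq> E \<and>
     (\<forall>i<length es. {bl (es!i), wh (es!i)} = {vs!i, vs!((i+1) mod length es)})"

definition cycle_image :: "('e \<Rightarrow> real \<Rightarrow> complex) \<Rightarrow> 'e list \<Rightarrow> complex set" where
  "cycle_image g es = (\<Union>e\<in>set es. path_image (g e))"

text \<open>Faces are the connected components of the complement of the drawing.
  Every bounded face is bounded by a simple cycle.\<close>

definition bounded_faces_simple ::
  "'v set \<Rightarrow> 'v set \<Rightarrow> 'e set \<Rightarrow> ('e \<Rightarrow> 'v) \<Rightarrow> ('e \<Rightarrow> 'v)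
   \<Rightarrow> ('v \<Rightarrow> complex) \<Rightarrow> ('e \<Rightarrow> real \<Rightarrow> complex) \<Rightarrow> bool" where
  "bounded_faces_simple B W E bl wh pos g \<longleftrightarrow>
     (\<forall>f\<in>components (- graph_set (B \<union> W) E pos g). bounded f \<longrightarrow>
        (\<exists>vs es. simple_cycle E bl wh vs es \<and> frontier f = cycle_image g es))"

definition face_edges ::
  "'e set \<Rightarrow> ('e \<Rightarrow> real \<Rightarrow> complex) \<Rightarrow> complex set \<Rightarrow> 'e set" where
  "face_edges E g f = {e\<in>E. path_image (g e) \<subseteq> frontier f}"

text \<open>A choice of cilia: the cilium at v is represented by a short straight segment from
  pos v to the point cil v which meets the drawing only at pos v; it therefore
  lies in a single angular sector (wedge) at v, and it lies in the face containing cil v.\<close>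

definition valid_cilia ::
  "'v set \<Rightarrow> 'e set \<Rightarrow> ('v \<Rightarrow> complex) \<Rightarrow> ('e \<Rightarrow> real \<Rightarrow> complex) \<Rightarrow> ('v \<Rightarrow> complex) \<Rightarrow> bool" where
  "valid_cilia V E pos g cil \<longleftrightarrow>
     (\<forall>v\<in>V. cil v \<noteq> pos v \<and> closed_segment (pos v) (cil v) \<inter> graph_set V E pos g = {pos v})"

definition kasteleyn ::
  "'v set \<Rightarrow> 'e set \<Rightarrow> ('v \<Rightarrow> complex) \<Rightarrow> ('e \<Rightarrow> real \<Rightarrow> complex)
   \<Rightarrow> ('v \<Rightarrow> nat) \<Rightarrow> ('v \<Rightarrow> complex) \<Rightarrow> ('e \<Rightarrow> int) \<Rightarrow> bool" where
  "kasteleyn V E pos g n cil \<epsilon> \<longleftrightarrow>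
     (\<forall>e\<in>E. \<epsilon> e = 1 \<or> \<epsilon> e = -1) \<and>
     (\<forall>f\<in>components (- graph_set V E pos g). bounded f \<longrightarrow>
        (\<Prod>e\<in>face_edges E g f. \<epsilon> e) =
          (-1) ^ (card (face_edges E g f) div 2 + 1 +
                  card {v\<in>V. pos v \<in> frontier f \<and> even (n v) \<and> cil v \<in> f}))"

end

theory Submission
  imports Defs
begin

text \<open>Induction on the number of edges meeting the inside of the cycle \<gamma>. If no edge does, the
  inside of \<gamma> is a bounded face with boundary \<gamma>, which has no interior vertices, and the claim
  is the Kasteleyn condition for that face. Otherwise the face inside \<gamma> along an edge of \<gamma>
  leaves \<gamma>, and its boundary contains a chord P: a path through the inside of \<gamma> between two
  vertices of \<gamma>. By the theta-curve lemma, P splits \<gamma> into cycles \<gamma>1 and \<gamma>2 whose insides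
  are disjoint and, with P minus its ends, fill the inside of \<gamma>; both meet fewer edges. The
  edges of P occur in both \<gamma>1 and \<gamma>2, so the sign products multiply. In the exponents the
  half-lengths add up to that of \<gamma> plus the length of P, and each of the |P| - 1 inner vertices
  v of P is counted once in the cilia terms of \<gamma>1 and \<gamma>2 if n v is even and contributes n v to
  the interior sum of \<gamma>; since [n v even] + n v + 1 is always even, the parities agree.\<close>

section \<open>Simple walks and cycles\<close>

definition simple_walk :: "'e set \<Rightarrow> ('e \<Rightarrow> 'v) \<Rightarrow> ('e \<Rightarrow> 'v) \<Rightarrow> 'v list \<Rightarrow> 'e list \<Rightarrow> bool" where
  "simple_walk E bl wh vs es \<longleftrightarrow> length vs = Suc (length es) \<and> distinct vs \<and> distinct es \<and> set es \<subseteq> E \<and>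
     (\<forall>i<length es. {bl (es!i), wh (es!i)} = {vs!i, vs!Suc i})"

lemma simple_walk_Nil: "simple_walk E bl wh vs [] \<longleftrightarrow> (\<exists>v. vs = [v])"
  unfolding simple_walk_def by (cases vs) auto

lemma simple_walk_Cons:
  "simple_walk E bl wh (v#vs) (e#es) \<longleftrightarrow>
     simple_walk E bl wh vs es \<and> v \<notin> set vs \<and> e \<notin> set es \<and> e \<in> E \<and> {bl e, wh e} = {v, hd vs}"
  by (cases vs) (auto simp: simple_walk_def All_less_Suc2)

lemma simple_walkD: "simple_walk E bl wh vs es \<Longrightarrow> distinct vs" "simple_walk E bl wh vs es \<Longrightarrow> distinct es"
  "simple_walk E bl wh vs es \<Longrightarrow> set es \<subseteq> E"
  by (simp_all add: simple_walk_def)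

lemma simple_walk_snoc:
  "simple_walk E bl wh (vs @ [v]) (es @ [e]) \<longleftrightarrow>
     simple_walk E bl wh vs es \<and> v \<notin> set vs \<and> e \<notin> set es \<and> e \<in> E \<and> {bl e, wh e} = {last vs, v}"
  by (cases vs rule: rev_cases) (auto simp: simple_walk_def All_less_Suc nth_append)

lemma simple_walk_rev: "simple_walk E bl wh vs es \<Longrightarrow> simple_walk E bl wh (rev vs) (rev es)"
proof (induction es arbitrary: vs)
  case Nil then show ?case by (auto simp: simple_walk_Nil)
next
  case (Cons e es)
  then obtain v us where vs: "vs = v # us" by (cases vs) (auto simp: simple_walk_def)
  with Cons.prems have w: "simple_walk E bl wh us es" "v \<notin> set us" "e \<notin> set es" "e \<in> E" "{bl e, wh e} = {v, hd us}"
    by (simp_all add: simple_walk_Cons)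
  have "us \<noteq> []" using w(1) by (auto simp: simple_walk_def)
  then have "last (rev us) = hd us" by (simp add: last_rev)
  then show ?case using Cons.IH[OF w(1)] w vs by (simp add: simple_walk_snoc insert_commute)
qed

lemma simple_walk_hd_neq_last:
  assumes "simple_walk E bl wh vs es" "es \<noteq> []"
  shows "hd vs \<noteq> last vs"
  using assms by (cases vs) (auto simp: simple_walk_def)

lemma simple_walk_vertices:
  assumes "simple_walk E bl wh vs es" "es \<noteq> []"
  shows "set vs = (\<Union>e\<in>set es. {bl e, wh e})"
  using assms
proof (induction es arbitrary: vs)
  case Nil then show ?case by simp
next
  case (Cons e es)
  then obtain v us where vs: "vs = v # us" by (cases vs) (auto simp: simple_walk_def)
  with Cons.prems have w: "simple_walk E bl wh us es" "{bl e, wh e} = {v, hd us}"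
    by (simp_all add: simple_walk_Cons)
  show ?case
  proof (cases "es = []")
    case True
    then obtain u where "us = [u]" using w(1) by (auto simp: simple_walk_Nil)
    then show ?thesis using vs w True by auto
  next
    case False
    have "us \<noteq> []" using w(1) by (auto simp: simple_walk_def)
    then have "hd us \<in> set us" by simp
    then show ?thesis using Cons.IH[OF w(1) False] vs w(2) by auto
  qed
qed

lemma nth_append_hd_Suc: "i < length vs \<Longrightarrow> (vs @ [hd vs]) ! Suc i = vs ! (Suc i mod length vs)"
proof -
  assume i: "i < length vs"
  show ?thesis
  proof (cases "Suc i < length vs")
    case True then show ?thesis by (simp add: nth_append)
  next
    case False then have "Suc i = length vs" using i by simp
    moreover have "vs \<noteq> []" using i by auto
    ultimately show ?thesis using i by (simp add: nth_append hd_conv_nth)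
  qed
qed

lemma simple_cycle_closed_list:
  "simple_cycle E bl wh vs es \<longleftrightarrow> length vs = length es \<and> 2 \<le> length es \<and> distinct vs \<and> distinct es \<and>
     set es \<subseteq> E \<and> (\<forall>i<length es. {bl (es!i), wh (es!i)} = {(vs @ [hd vs])!i, (vs @ [hd vs])!Suc i})"
proof -
  have "length vs = length es \<Longrightarrow> i < length es \<Longrightarrow>
        {(vs @ [hd vs])!i, (vs @ [hd vs])!Suc i} = {vs!i, vs!((i+1) mod length es)}" for i
    using nth_append_hd_Suc[of i vs] by (simp add: nth_append)
  then have "length vs = length es \<Longrightarrow>
     (\<forall>i<length es. {bl (es!i), wh (es!i)} = {(vs @ [hd vs])!i, (vs @ [hd vs])!Suc i}) \<longleftrightarrow>
     (\<forall>i<length es. {bl (es!i), wh (es!i)} = {vs!i, vs!((i+1) mod length es)})" by simp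
  then show ?thesis unfolding simple_cycle_def by blast
qed

lemma simple_cycle_split_walks:
  assumes c: "simple_cycle E bl wh vs es" and b: "0 < b" "b < length es"
  shows "simple_walk E bl wh (take (Suc b) vs) (take b es)"
    and "simple_walk E bl wh (drop b vs @ [hd vs]) (drop b es)"
proof -
  let ?Y = "vs @ [hd vs]"
  have l: "length vs = length es" and d: "distinct vs" "distinct es" and s: "set es \<subseteq> E"
    and cond: "\<forall>i<length es. {bl (es!i), wh (es!i)} = {?Y!i, ?Y!Suc i}"
    using c by (simp_all add: simple_cycle_closed_list)
  show "simple_walk E bl wh (take (Suc b) vs) (take b es)"
    unfolding simple_walk_def
  proof (intro conjI allI impI)
    fix i assume "i < length (take b es)"
    then have "i < b" by simp
    then show "{bl (take b es ! i), wh (take b es ! i)} = {take (Suc b) vs ! i, take (Suc b) vs ! Suc i}"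
      using cond b l by (simp add: nth_append)
  qed (use b l d s in \<open>auto dest: in_set_takeD\<close>)
  have dd: "drop b vs @ [hd vs] = drop b ?Y" using b l by simp
  have hd_notin: "hd vs \<notin> set (drop b vs)"
  proof
    assume "hd vs \<in> set (drop b vs)"
    then obtain k where k: "k < length (drop b vs)" "drop b vs ! k = hd vs" by (auto simp: in_set_conv_nth)
    moreover have "vs \<noteq> []" using b l by auto
    ultimately have "vs ! (b + k) = vs ! 0" using b l by (simp add: hd_conv_nth)
    moreover have "b + k < length vs" using k by simp
    ultimately have "b + k = 0" using d(1) nth_eq_iff_index_eq by fastforce
    then show False using b by simp
  qed
  show "simple_walk E bl wh (drop b vs @ [hd vs]) (drop b es)"
    unfolding simple_walk_def
  proof (intro conjI allI impI)
    fix i assume "i < length (drop b es)"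
    then have "b + i < length es" by simp
    then show "{bl (drop b es ! i), wh (drop b es ! i)} = {(drop b vs @ [hd vs]) ! i, (drop b vs @ [hd vs]) ! Suc i}"
    proof -
      have dn: "(drop b vs @ [hd vs]) ! k = ?Y ! (b + k)" for k
        unfolding dd using b l by (intro nth_drop) simp
      show ?thesis unfolding dn using cond \<open>b + i < length es\<close> by simp
    qed
  qed (use b l d s hd_notin in \<open>auto dest: in_set_dropD\<close>)
qed

lemma distinct_butlast_append_butlast:
  assumes d: "distinct xs" "distinct ys" and ne: "xs \<noteq> []" "ys \<noteq> []"
    and ends: "last xs = hd ys" "last ys = hd xs" and meet: "set xs \<inter> set ys \<subseteq> {hd xs, hd ys}"
  shows "distinct (butlast xs @ butlast ys)"
proof -
  have "hd ys \<notin> set (butlast xs)" "hd xs \<notin> set (butlast ys)"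
    using d ne ends by (metis append_butlast_last_id distinct_append not_distinct_conv_prefix)+
  then have "set (butlast xs) \<inter> set (butlast ys) = {}"
    using meet by (auto dest: in_set_butlastD)
  then show ?thesis using d by (simp add: distinct_butlast)
qed

lemma simple_cycle_join_walks:
  assumes A: "simple_walk E bl wh vsA esA" and Bw: "simple_walk E bl wh vsB esB"
    and ne: "esA \<noteq> []" "esB \<noteq> []"
    and e1: "last vsA = hd vsB" and e2: "last vsB = hd vsA"
    and vint: "set vsA \<inter> set vsB \<subseteq> {hd vsA, hd vsB}"
    and eint: "set esA \<inter> set esB = {}"
  shows "simple_cycle E bl wh (butlast vsA @ butlast vsB) (esA @ esB)"
proof -
  have lA: "length vsA = Suc (length esA)" and lB: "length vsB = Suc (length esB)"
    using A Bw by (simp_all add: simple_walk_def)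
  have dA: "distinct vsA" "distinct esA" "set esA \<subseteq> E" and dB: "distinct vsB" "distinct esB" "set esB \<subseteq> E"
    using A Bw by (simp_all add: simple_walk_def)
  let ?X = "butlast vsA @ butlast vsB"
  have nA: "vsA \<noteq> []" "butlast vsA \<noteq> []" using lA ne by (auto simp: butlast_conv_take)
  have nB: "vsB \<noteq> []" "butlast vsB \<noteq> []" using lB ne by (auto simp: butlast_conv_take)
  have "hd (butlast vsA) = hd vsA" using nA by (metis append_butlast_last_id hd_append2)
  then have hdX: "hd ?X = hd vsA" using nA by (simp add: hd_append)
  have bB: "butlast vsB @ [hd vsA] = vsB" using e2 nB by (metis append_butlast_last_id)
  have bA: "butlast vsA @ [hd vsB] = vsA" using e1 nA by (metis append_butlast_last_id)
  have Y1: "?X @ [hd ?X] = butlast vsA @ vsB" using hdX bB by simp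
  have Y2: "?X @ [hd ?X] = vsA @ tl vsB" using Y1 bA nB
    by (metis append.assoc append_Cons append_Nil list.collapse)
  have lbA: "length (butlast vsA) = length esA" using lA by simp
  show ?thesis unfolding simple_cycle_closed_list
  proof (intro conjI allI impI)
    show "length ?X = length (esA @ esB)" using lA lB by simp
    show "2 \<le> length (esA @ esB)" using ne by (cases esA; cases esB) auto
    show "distinct ?X"
      using distinct_butlast_append_butlast dA(1) dB(1) nA(1) nB(1) e1 e2 vint by blast
    show "distinct (esA @ esB)" using dA dB eint by simp
    show "set (esA @ esB) \<subseteq> E" using dA dB by simp
    fix i assume i: "i < length (esA @ esB)"
    show "{bl ((esA @ esB) ! i), wh ((esA @ esB) ! i)} = {(?X @ [hd ?X]) ! i, (?X @ [hd ?X]) ! Suc i}"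
    proof (cases "i < length esA")
      case True
      have "{bl (esA ! i), wh (esA ! i)} = {vsA!i, vsA!Suc i}" using A True by (simp add: simple_walk_def)
      then show ?thesis unfolding Y2 using True lA by (simp add: nth_append)
    next
      case False
      define j where "j = i - length esA"
      have j: "j < length esB" "i = length esA + j" using i False by (auto simp: j_def)
      have "{bl (esB ! j), wh (esB ! j)} = {vsB!j, vsB!Suc j}" using Bw j by (simp add: simple_walk_def)
      then show ?thesis unfolding Y1 using j lbA lB by (simp add: nth_append)
    qed
  qed
qed

lemma set_join_walks:
  assumes A: "simple_walk E bl wh vsA esA" and B: "simple_walk E bl wh vsB esB"
    and ne: "esA \<noteq> []" "esB \<noteq> []"
    and e1: "last vsA = hd vsB" and e2: "last vsB = hd vsA"
  shows "set (butlast vsA @ butlast vsB) = set vsA \<union> set vsB"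
proof -
  have "length vsA = Suc (length esA)" "length vsB = Suc (length esB)"
    using A B by (simp_all add: simple_walk_def)
  then have nA: "vsA \<noteq> []" "butlast vsA \<noteq> []" and nB: "vsB \<noteq> []" "butlast vsB \<noteq> []"
    using ne by (auto simp: butlast_conv_take)
  have bA: "butlast vsA @ [hd vsB] = vsA" and bB: "butlast vsB @ [hd vsA] = vsB"
    using e1 e2 append_butlast_last_id[OF nA(1)] append_butlast_last_id[OF nB(1)] by simp_all
  have "hd vsA \<in> set (butlast vsA)" using hd_append2[OF nA(2), of "[hd vsB]"] nA(2) bA by simp
  moreover have "hd vsB \<in> set (butlast vsB)" using hd_append2[OF nB(2), of "[hd vsA]"] nB(2) bB by simp
  moreover have "set vsA = insert (hd vsB) (set (butlast vsA))" "set vsB = insert (hd vsA) (set (butlast vsB))"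
    using arg_cong[OF bA, of set] arg_cong[OF bB, of set] by simp_all
  ultimately show ?thesis by auto
qed

lemma simple_cycle_split:
  assumes c: "simple_cycle E bl wh vs es" and b: "0 < b" "b < length es"
  defines "vsA \<equiv> take (Suc b) vs" and "esA \<equiv> take b es"
      and "vsB \<equiv> drop b vs @ [hd vs]" and "esB \<equiv> drop b es"
  shows "simple_walk E bl wh vsA esA" "simple_walk E bl wh vsB esB" "esA \<noteq> []" "esB \<noteq> []"
    "set esA \<inter> set esB = {}" "last vsA = vs!b" "hd vsB = vs!b" "last vsB = hd vs" "hd vsA = hd vs"
    "set vsA \<inter> set vsB = {hd vs, vs!b}" "set esA \<union> set esB = set es" "set vsA \<union> set vsB = set vs"
    "hd vs \<noteq> vs!b"
proof -
  have l: "length vs = length es" and d: "distinct vs" "distinct es"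
    using c by (simp_all add: simple_cycle_closed_list)
  have vne: "vs \<noteq> []" using b l by auto
  show "simple_walk E bl wh vsA esA" "simple_walk E bl wh vsB esB" unfolding vsA_def esA_def vsB_def esB_def
    using simple_cycle_split_walks[OF c b] by auto
  show "esA \<noteq> []" "esB \<noteq> []" using b by (auto simp: esA_def esB_def)
  show "set esA \<inter> set esB = {}" using d(2) by (simp add: esA_def esB_def set_take_disj_set_drop_if_distinct)
  have "length (take (Suc b) vs) = Suc b" using b l by simp
  moreover have "take (Suc b) vs \<noteq> []" using b l by auto
  ultimately have "last (take (Suc b) vs) = take (Suc b) vs ! b" by (simp add: last_conv_nth)
  then show "last vsA = vs!b" unfolding vsA_def by simp
  show "hd vsB = vs!b" using b l by (simp add: vsB_def hd_drop_conv_nth)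
  show "last vsB = hd vs" by (simp add: vsB_def)
  show "hd vsA = hd vs" using vne by (simp add: vsA_def)
  have "0 < length vs" "b < length vs" using b l by linarith+
  then have "vs!0 = vs!b \<longleftrightarrow> 0 = b" by (rule nth_eq_iff_index_eq[OF d(1)])
  then have "vs!0 \<noteq> vs!b" using b by linarith
  then show hb: "hd vs \<noteq> vs!b" using vne by (simp add: hd_conv_nth)
  have hin: "hd vs \<in> set (take (Suc b) vs)" using vne by (cases vs) auto
  have bl: "b < length vs" using b l by linarith
  have tS: "take (Suc b) vs = take b vs @ [vs!b]" using bl by (rule take_Suc_conv_app_nth)
  have dS: "drop b vs = vs!b # drop (Suc b) vs" using bl by (rule Cons_nth_drop_Suc[symmetric])
  have bin: "vs!b \<in> set (take (Suc b) vs)" unfolding tS by simp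
  have bin2: "vs!b \<in> set (drop b vs)" unfolding dS by simp
  have "distinct (take b vs @ drop b vs)" using d(1) by simp
  then have tdd: "set (take b vs) \<inter> set (drop b vs) = {}" by (simp only: distinct_append)
  have tdi: "set (take (Suc b) vs) \<inter> set (drop b vs) \<subseteq> {vs!b}"
    unfolding tS using tdd by auto
  show "set vsA \<inter> set vsB = {hd vs, vs!b}" unfolding vsA_def vsB_def
    using tdi hin bin bin2 by auto
  show "set esA \<union> set esB = set es" unfolding esA_def esB_def
    using set_append[of "take b es" "drop b es"] by simp
  have "set vs = set (take b vs) \<union> set (drop b vs)" using set_append[of "take b vs" "drop b vs"] by simp
  then have "set (take (Suc b) vs) \<union> set (drop b vs) = set vs" using bin2 unfolding tS by auto
  then show "set vsA \<union> set vsB = set vs" unfolding vsA_def vsB_def using hin by auto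
qed

lemma simple_cycle_vertices:
  assumes c: "simple_cycle E bl wh vs es"
  shows "set vs = (\<Union>e\<in>set es. {bl e, wh e})"
proof -
  have b: "0 < (1::nat)" "1 < length es" using c by (auto simp: simple_cycle_def)
  note s = simple_cycle_split[OF c b]
  have "set vs = set (take 2 vs) \<union> set (drop 1 vs @ [hd vs])" using s(12) by (simp add: numeral_2_eq_2)
  also have "\<dots> = (\<Union>e\<in>set (take 1 es). {bl e, wh e}) \<union> (\<Union>e\<in>set (drop 1 es). {bl e, wh e})"
    using simple_walk_vertices[OF s(1) s(3)] simple_walk_vertices[OF s(2) s(4)] by (simp add: numeral_2_eq_2)
  also have "\<dots> = (\<Union>e\<in>set es. {bl e, wh e})" using s(11) by auto
  finally show ?thesis .
qed

lemma simple_cycle_rotate: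
  assumes c: "simple_cycle E bl wh vs es" and a: "0 < a" "a < length es"
  shows "simple_cycle E bl wh (drop a vs @ take a vs) (drop a es @ take a es)"
proof -
  note s = simple_cycle_split[OF c a]
  have j: "simple_cycle E bl wh (butlast (drop a vs @ [hd vs]) @ butlast (take (Suc a) vs)) (drop a es @ take a es)"
    using s by (intro simple_cycle_join_walks) (auto simp: Int_commute)
  have l: "length vs = length es" using c by (simp add: simple_cycle_def)
  have "butlast (take (Suc a) vs) = take a vs" using a l by (simp add: butlast_take)
  then show ?thesis using j by simp
qed

lemma simple_cycle_rotate_start:
  assumes c: "simple_cycle E bl wh vs es" and a: "a < length es"
  obtains vs' es' where "simple_cycle E bl wh vs' es'" "set vs' = set vs" "set es' = set es"
    "length es' = length es" "hd vs' = vs ! a"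
proof (cases "a = 0")
  case True
  have "vs \<noteq> []" using c a by (auto simp: simple_cycle_def)
  then show ?thesis using that[OF c] True by (simp add: hd_conv_nth)
next
  case False
  have l: "length vs = length es" using c by (simp add: simple_cycle_def)
  show ?thesis
  proof (rule that[OF simple_cycle_rotate[OF c _ a]])
    show "set (drop a vs @ take a vs) = set vs" "set (drop a es @ take a es) = set es"
      by (metis Un_commute append_take_drop_id set_append)+
    show "length (drop a es @ take a es) = length es" "hd (drop a vs @ take a vs) = vs ! a"
      using a l by (auto simp: hd_drop_conv_nth)
  qed (use False in simp)
qed

lemma simple_cycle_rotate_leaving:
  assumes c: "simple_cycle E bl wh vs es" and some_in: "set es \<inter> S \<noteq> {}" and some_out: "\<not> set es \<subseteq> S"
  obtains vs' es' where "simple_cycle E bl wh vs' es'" "set es' = set es" "es' ! 0 \<notin> S" "last es' \<in> S"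
proof -
  have rot: "simple_cycle E bl wh (drop a xs @ take a xs) (drop a ys @ take a ys)"
    "set (drop a ys @ take a ys) = set ys" "(drop a ys @ take a ys) ! 0 = ys ! a"
    "last (drop a ys @ take a ys) = ys ! (a - 1)"
    if "simple_cycle E bl wh xs ys" "0 < a" "a < length ys" for xs ys a
    using simple_cycle_rotate[OF that] that(2,3) set_append[of "take a ys" "drop a ys"]
    by (auto simp: nth_append last_conv_nth)
  obtain vs1 es1 where c1: "simple_cycle E bl wh vs1 es1" and s1: "set es1 = set es" and h1: "es1 ! 0 \<in> S"
  proof -
    obtain k where k: "k < length es" "es ! k \<in> S" using some_in by (auto simp: in_set_conv_nth)
    show thesis
    proof (cases "k = 0")
      case True then show ?thesis using that[OF c] k by simp
    next
      case False then show ?thesis using that[OF rot(1)[OF c]] rot(2-3)[OF c] k by simp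
    qed
  qed
  have ex: "\<exists>i. i < length es1 \<and> es1 ! i \<notin> S"
    using some_out unfolding s1[symmetric] by (auto simp: in_set_conv_nth)
  define i where "i = (LEAST i. i < length es1 \<and> es1 ! i \<notin> S)"
  have i: "i < length es1" "es1 ! i \<notin> S" using LeastI_ex[OF ex] unfolding i_def by blast+
  have i0: "0 < i" using i h1 by (cases i) auto
  have "es1 ! (i - 1) \<in> S"
    using not_less_Least[of "i - 1" "\<lambda>i. i < length es1 \<and> es1 ! i \<notin> S"] i i0 unfolding i_def by auto
  then show thesis using that[OF rot(1)[OF c1 i0 i(1)]] rot(2-4)[OF c1 i0 i(1)] i s1 by simp
qed

lemma simple_cycle_edge_ends:
  assumes c: "simple_cycle E bl wh vs es" and i: "i < length es"
  shows "vs!i \<in> {bl (es!i), wh (es!i)}" "vs!((i+1) mod length es) \<in> {bl (es!i), wh (es!i)}"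
  using c i unfolding simple_cycle_def by auto

lemma simple_cycle_first_return:
  assumes c: "simple_cycle E bl wh vs es" and c': "simple_cycle E bl wh vs' es'"
    and last_on: "last es' \<in> set es"
  obtains j where "0 < j" "j < length es'" "vs' ! 0 \<in> set vs" "vs' ! j \<in> set vs"
    "\<And>t. 0 < t \<Longrightarrow> t < j \<Longrightarrow> vs' ! t \<notin> set vs"
proof -
  define m where "m = length es'"
  have m2: "2 \<le> m" using c' by (simp add: simple_cycle_def m_def)
  have "es' \<noteq> []" using m2 m_def by auto
  then have "last es' = es' ! (m - 1)" by (simp add: last_conv_nth m_def)
  moreover have "(m - 1 + 1) mod m = 0" using m2 by simp
  ultimately have "vs' ! (m - 1) \<in> {bl (last es'), wh (last es')}" "vs' ! 0 \<in> {bl (last es'), wh (last es')}"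
    using simple_cycle_edge_ends[OF c', of "m - 1"] m2 unfolding m_def by auto
  then have v0: "vs' ! 0 \<in> set vs" and vm: "vs' ! (m - 1) \<in> set vs"
    using simple_cycle_vertices[OF c] last_on by auto
  define j where "j = (LEAST j. 0 < j \<and> vs' ! j \<in> set vs)"
  have "0 < m - 1" using m2 by simp
  then have j: "0 < j" "vs' ! j \<in> set vs" "j \<le> m - 1"
    using LeastI[of "\<lambda>j. 0 < j \<and> vs' ! j \<in> set vs"] Least_le[of "\<lambda>j. 0 < j \<and> vs' ! j \<in> set vs"] vm
    unfolding j_def by blast+
  show thesis
  proof (rule that[OF j(1) _ v0 j(2)])
    show "j < length es'" using j(3) m2 unfolding m_def by simp
    show "vs' ! t \<notin> set vs" if "0 < t" "t < j" for t
      using not_less_Least[of t "\<lambda>j. 0 < j \<and> vs' ! j \<in> set vs"] that unfolding j_def by blast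
  qed
qed

lemma simple_cycle_prefix_chord:
  assumes c: "simple_cycle E bl wh vs es" and c': "simple_cycle E bl wh vs' es'"
    and j: "0 < j" "j < length es'" and first: "es' ! 0 \<notin> set es"
    and ends: "vs' ! 0 \<in> set vs" "vs' ! j \<in> set vs"
    and between: "\<And>t. 0 < t \<Longrightarrow> t < j \<Longrightarrow> vs' ! t \<notin> set vs"
  shows "set (take j es') \<inter> set es = {}"
    and "set (take (Suc j) vs') \<inter> set vs = {hd (take (Suc j) vs'), last (take (Suc j) vs')}"
proof -
  have l: "length vs' = length es'" using c' by (simp add: simple_cycle_def)
  have ends_on: "e \<in> set es \<Longrightarrow> bl e \<in> set vs \<and> wh e \<in> set vs" for e
    using simple_cycle_vertices[OF c] by auto
  show "set (take j es') \<inter> set es = {}"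
  proof (rule ccontr)
    assume "set (take j es') \<inter> set es \<noteq> {}"
    then obtain x where x: "x \<in> set (take j es')" "x \<in> set es" by blast
    then obtain t where "t < length (take j es')" "take j es' ! t = x" by (meson in_set_conv_nth)
    then have t: "t < j" "es' ! t \<in> set es" using x(2) by auto
    then have "vs' ! t \<in> set vs"
      using simple_cycle_edge_ends(1)[OF c', of t] ends_on[of "es' ! t"] j(2) by auto
    then show False using between[of t] first t by (cases "t = 0") auto
  qed
  have ne: "take (Suc j) vs' \<noteq> []" and "length (take (Suc j) vs') = Suc j" using j l by auto
  then have hd: "hd (take (Suc j) vs') = vs' ! 0" and last: "last (take (Suc j) vs') = vs' ! j"
    using last_conv_nth[OF ne] by (simp_all add: hd_conv_nth)
  have "v \<in> {vs' ! 0, vs' ! j}" if v: "v \<in> set (take (Suc j) vs')" "v \<in> set vs" for v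
  proof -
    obtain t where "t < length (take (Suc j) vs')" "take (Suc j) vs' ! t = v"
      using v(1) by (meson in_set_conv_nth)
    then have "t \<le> j" "vs' ! t = v" by auto
    then show ?thesis using between[of t] v(2) by (cases "t = 0") (auto simp: le_less)
  qed
  then have "set (take (Suc j) vs') \<inter> set vs \<subseteq> {vs' ! 0, vs' ! j}" by blast
  moreover have "{vs' ! 0, vs' ! j} \<subseteq> set (take (Suc j) vs')"
    using j l by (auto simp: in_set_conv_nth intro: exI[of _ 0] exI[of _ j])
  ultimately show "set (take (Suc j) vs') \<inter> set vs = {hd (take (Suc j) vs'), last (take (Suc j) vs')}"
    unfolding hd last using ends by blast
qed

lemma even_card_even_plus_sum_plus_card:
  fixes n :: "'v \<Rightarrow> nat"
  assumes "finite X"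
  shows "even (card {v\<in>X. even (n v)} + (\<Sum>v\<in>X. n v) + card X)"
  using assms
proof (induction X rule: finite_induct)
  case empty then show ?case by simp
next
  case (insert x X)
  have f: "finite {v\<in>X. even (n v)}" using insert(1) by simp
  have xn: "x \<notin> {v\<in>X. even (n v)}" using insert(2) by simp
  show ?case
  proof (cases "even (n x)")
    case True
    then have "{v\<in>insert x X. even (n v)} = insert x {v\<in>X. even (n v)}" by auto
    then have "card {v\<in>insert x X. even (n v)} = Suc (card {v\<in>X. even (n v)})" using f xn by simp
    then show ?thesis using insert True by simp
  next
    case False
    then have "{v\<in>insert x X. even (n v)} = {v\<in>X. even (n v)}" by auto
    moreover have "(\<Sum>v\<in>insert x X. n v) = n x + (\<Sum>v\<in>X. n v)" "card (insert x X) = Suc (card X)"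
      using insert(1,2) by simp_all
    moreover have "odd (n x)" using False by simp
    ultimately show ?thesis using insert.IH by presburger
  qed
qed

lemma minus_one_power_eq: "even (a + b) \<Longrightarrow> (-1::int) ^ a = (-1) ^ b"
  by (cases "even a") (auto simp: neg_one_even_power neg_one_odd_power)

section \<open>Walks in the plane\<close>

definition edge_path_from :: "('e \<Rightarrow> real \<Rightarrow> complex) \<Rightarrow> ('e \<Rightarrow> 'v) \<Rightarrow> 'e \<Rightarrow> 'v \<Rightarrow> real \<Rightarrow> complex" where
  "edge_path_from g bl e v = (if v = bl e then g e else reversepath (g e))"

fun walk_path :: "('e \<Rightarrow> real \<Rightarrow> complex) \<Rightarrow> ('e \<Rightarrow> 'v) \<Rightarrow> 'v list \<Rightarrow> 'e list \<Rightarrow> real \<Rightarrow> complex" where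
  "walk_path g bl (v#vs) (e#es) = (if es = [] then edge_path_from g bl e v else edge_path_from g bl e v +++ walk_path g bl vs es)"
| "walk_path g bl _ _ = linepath 0 0"

lemma simple_walk_edge_ends:
  assumes "simple_walk E bl wh vs es" "e \<in> set es" shows "bl e \<in> set vs" "wh e \<in> set vs"
proof -
  have "es \<noteq> []" using assms(2) by auto
  then have "set vs = (\<Union>e\<in>set es. {bl e, wh e})" using simple_walk_vertices[OF assms(1)] by blast
  then show "bl e \<in> set vs" "wh e \<in> set vs" using assms(2) by blast+
qed

lemma cycle_image_append: "cycle_image g (xs @ ys) = cycle_image g xs \<union> cycle_image g ys"
  by (auto simp: cycle_image_def)

lemma cycle_image_rev [simp]: "cycle_image g (rev es) = cycle_image g es"
  by (simp add: cycle_image_def)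

lemma connected_subset_inside:
  assumes "connected S" "S \<inter> J = {}" "S \<inter> inside J \<noteq> {}"
  shows "S \<subseteq> inside J"
proof -
  have "outside J \<inter> S = {}"
    using inside_outside_intersect_connected[OF assms(1)] assms(2,3) by blast
  moreover have "S \<subseteq> inside J \<union> outside J" using assms(2) by auto
  ultimately show ?thesis by blast
qed

locale plane_graph =
  fixes B W :: "'v set" and E :: "'e set" and bl wh :: "'e \<Rightarrow> 'v"
    and pos :: "'v \<Rightarrow> complex" and g :: "'e \<Rightarrow> real \<Rightarrow> complex"
  assumes plane: "plane_bipartite_graph B W E bl wh pos g"
begin

abbreviation "V \<equiv> B \<union> W"
abbreviation "G \<equiv> graph_set V E pos g"
abbreviation "cycle_inside es \<equiv> inside (cycle_image g es)"

lemma finite_vertices: "finite V"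
  using plane by (simp add: plane_bipartite_graph_def)

lemma finite_edges: "finite E"
  using plane by (simp add: plane_bipartite_graph_def)

lemma black_white_disjoint: "B \<inter> W = {}"
  using plane by (simp add: plane_bipartite_graph_def)

lemma bl_black: "e \<in> E \<Longrightarrow> bl e \<in> B"
  using plane by (simp add: plane_bipartite_graph_def)

lemma wh_white: "e \<in> E \<Longrightarrow> wh e \<in> W"
  using plane by (simp add: plane_bipartite_graph_def)

lemma inj_pos: "inj_on pos V"
  using plane by (simp add: plane_bipartite_graph_def)

lemma arc_edge: "e \<in> E \<Longrightarrow> arc (g e)"
  using plane by (simp add: plane_bipartite_graph_def)

lemma pathstart_edge: "e \<in> E \<Longrightarrow> pathstart (g e) = pos (bl e)"
  using plane by (simp add: plane_bipartite_graph_def)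

lemma pathfinish_edge: "e \<in> E \<Longrightarrow> pathfinish (g e) = pos (wh e)"
  using plane by (simp add: plane_bipartite_graph_def)

lemma vertex_on_edge: "e \<in> E \<Longrightarrow> v \<in> V \<Longrightarrow> pos v \<in> path_image (g e) \<Longrightarrow> v = bl e \<or> v = wh e"
  using plane by (simp add: plane_bipartite_graph_def)

lemma edges_meet_at_common_ends:
  "e \<in> E \<Longrightarrow> e' \<in> E \<Longrightarrow> e \<noteq> e' \<Longrightarrow>
     path_image (g e) \<inter> path_image (g e') \<subseteq> pos ` ({bl e, wh e} \<inter> {bl e', wh e'})"
  using plane by (simp add: plane_bipartite_graph_def)

lemma edge_ends_vertices: "e \<in> E \<Longrightarrow> bl e \<in> V" "e \<in> E \<Longrightarrow> wh e \<in> V"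
  by (simp_all add: bl_black wh_white)

lemma bl_ne_wh: "e \<in> E \<Longrightarrow> bl e \<noteq> wh e"
  using bl_black wh_white black_white_disjoint by fastforce

lemma closed_vertex_positions: "closed (pos ` V)"
  using finite_vertices by (simp add: finite_imp_closed)

lemma closed_edge_images: "F \<subseteq> E \<Longrightarrow> closed (\<Union>e\<in>F. path_image (g e))"
  by (intro closed_UN finite_subset[OF _ finite_edges]) (auto intro!: closed_path_image arc_imp_path arc_edge)

lemma closed_drawing: "closed G"
  unfolding graph_set_def using closed_vertex_positions closed_edge_images[of E] by (intro closed_Un) auto

lemma edge_subset_drawing: "e \<in> E \<Longrightarrow> path_image (g e) \<subseteq> G"
  unfolding graph_set_def by blast

lemma edge_eq_at_non_vertex:
  assumes "e \<in> E" "e' \<in> E" "x \<in> path_image (g e)" "x \<in> path_image (g e')" "x \<notin> pos ` V"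
  shows "e = e'"
proof (rule ccontr)
  assume "e \<noteq> e'"
  then have "x \<in> pos ` ({bl e, wh e} \<inter> {bl e', wh e'})" using edges_meet_at_common_ends[OF assms(1,2)] assms(3,4) by blast
  moreover have "{bl e, wh e} \<inter> {bl e', wh e'} \<subseteq> V" using edge_ends_vertices[OF assms(1)] by auto
  ultimately show False using assms(5) by blast
qed

lemma edge_ends_on_edge: "e \<in> E \<Longrightarrow> pos (bl e) \<in> path_image (g e)" "e \<in> E \<Longrightarrow> pos (wh e) \<in> path_image (g e)"
  using pathstart_in_path_image[of "g e"] pathfinish_in_path_image[of "g e"] pathstart_edge pathfinish_edge
  by simp_all

lemma edge_midpoint:
  assumes "e \<in> E" shows "g e (1/2) \<in> path_image (g e)" "g e (1/2) \<notin> pos ` V"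
proof -
  show "g e (1/2) \<in> path_image (g e)" by (auto simp: path_image_def)
  show "g e (1/2) \<notin> pos ` V"
  proof
    assume "g e (1/2) \<in> pos ` V"
    then obtain v where v: "v \<in> V" "g e (1/2) = pos v" by auto
    then have "v = bl e \<or> v = wh e" using vertex_on_edge[OF assms v(1)] \<open>g e (1/2) \<in> path_image (g e)\<close> by auto
    then have "g e (1/2) = g e 0 \<or> g e (1/2) = g e 1"
      using v pathstart_edge[OF assms] pathfinish_edge[OF assms] by (auto simp: pathstart_def pathfinish_def)
    moreover have "inj_on (g e) {0..1}" using arc_edge[OF assms] by (simp add: arc_def)
    ultimately show False by (auto dest: inj_onD)
  qed
qed

lemma edge_midpoint_isolated:
  assumes e0: "e0 \<in> E"
  shows "\<exists>r>0. ball (g e0 (1/2)) r \<inter> G \<subseteq> path_image (g e0) \<and> ball (g e0 (1/2)) r \<inter> pos ` V = {}"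
proof -
  let ?x = "g e0 (1/2)"
  let ?K = "pos ` V \<union> (\<Union>e\<in>E - {e0}. path_image (g e))"
  have cK: "closed ?K" using closed_vertex_positions closed_edge_images[of "E - {e0}"] by (intro closed_Un) auto
  have xK: "?x \<notin> ?K"
  proof
    assume "?x \<in> ?K"
    moreover have "?x \<notin> pos ` V" by (rule edge_midpoint(2)[OF e0])
    ultimately obtain e where e: "e \<in> E" "e \<noteq> e0" "?x \<in> path_image (g e)" by blast
    have "e0 = e" using edge_eq_at_non_vertex[OF e0 e(1) edge_midpoint(1)[OF e0] e(3) edge_midpoint(2)[OF e0]] .
    then show False using e(2) by simp
  qed
  have "open (- ?K)" using open_Compl[OF cK] .
  then obtain r where r: "r > 0" "ball ?x r \<subseteq> - ?K" using xK by (meson ComplI open_contains_ball_eq)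
  have "ball ?x r \<inter> G \<subseteq> path_image (g e0)"
  proof
    fix z assume z: "z \<in> ball ?x r \<inter> G"
    then have "z \<notin> ?K" using r by blast
    with z show "z \<in> path_image (g e0)" unfolding graph_set_def by blast
  qed
  moreover have "ball ?x r \<inter> pos ` V = {}" using r by blast
  ultimately show ?thesis using r(1) by blast
qed

lemma edge_path_from_props:
  assumes e: "e \<in> E" and uv: "{bl e, wh e} = {v, u}"
  shows "arc (edge_path_from g bl e v)" "pathstart (edge_path_from g bl e v) = pos v" "pathfinish (edge_path_from g bl e v) = pos u"
    "path_image (edge_path_from g bl e v) = path_image (g e)"
proof -
  have ne: "bl e \<noteq> wh e" by (rule bl_ne_wh[OF e])
  show "arc (edge_path_from g bl e v)" using arc_edge[OF e] by (simp add: edge_path_from_def arc_reversepath)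
  show "path_image (edge_path_from g bl e v) = path_image (g e)" by (simp add: edge_path_from_def)
  have "(v = bl e \<and> u = wh e) \<or> (v = wh e \<and> u = bl e)" using uv ne by (auto simp: doubleton_eq_iff)
  then show "pathstart (edge_path_from g bl e v) = pos v" "pathfinish (edge_path_from g bl e v) = pos u"
    using pathstart_edge[OF e] pathfinish_edge[OF e] ne by (auto simp: edge_path_from_def)
qed

lemma arc_walk_path:
  assumes "simple_walk E bl wh vs es" "es \<noteq> []"
  shows "arc (walk_path g bl vs es) \<and> pathstart (walk_path g bl vs es) = pos (hd vs) \<and>
         pathfinish (walk_path g bl vs es) = pos (last vs) \<and>
         path_image (walk_path g bl vs es) = cycle_image g es"
  using assms
proof (induction es arbitrary: vs)
  case Nil then show ?case by simp
next
  case (Cons e es)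
  then obtain v us where vs: "vs = v # us" by (cases vs) (auto simp: simple_walk_def)
  with Cons.prems have w: "simple_walk E bl wh us es" "v \<notin> set us" "e \<notin> set es" "e \<in> E" "{bl e, wh e} = {v, hd us}"
    by (simp_all add: simple_walk_Cons)
  note o = edge_path_from_props[OF w(4) w(5)]
  show ?case
  proof (cases "es = []")
    case True
    then obtain u where "us = [u]" using w(1) by (auto simp: simple_walk_Nil)
    then show ?thesis using vs o True by (simp add: cycle_image_def)
  next
    case False
    have us: "us \<noteq> []" using w(1) by (auto simp: simple_walk_def)
    note IH = Cons.IH[OF w(1) False]
    have int: "path_image (edge_path_from g bl e v) \<inter> path_image (walk_path g bl us es) \<subseteq> {pathstart (walk_path g bl us es)}"
    proof
      fix x assume x: "x \<in> path_image (edge_path_from g bl e v) \<inter> path_image (walk_path g bl us es)"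
      then obtain e' where e': "e' \<in> set es" "x \<in> path_image (g e')" "x \<in> path_image (g e)" using IH o by (auto simp: cycle_image_def)
      have e'E: "e' \<in> E" using e' w(1) simple_walkD(3) by blast
      have "e \<noteq> e'" using e' w(3) by auto
      then have "x \<in> pos ` ({bl e, wh e} \<inter> {bl e', wh e'})" using edges_meet_at_common_ends[OF w(4) e'E] e' by blast
      moreover have "{bl e', wh e'} \<subseteq> set us" using simple_walk_edge_ends[OF w(1) e'(1)] by auto
      ultimately have "x = pos (hd us)" using w(2,5) by auto
      then show "x \<in> {pathstart (walk_path g bl us es)}" using IH by simp
    qed
    have "arc (edge_path_from g bl e v +++ walk_path g bl us es)" using o IH int by (intro arc_join) auto
    moreover have "last vs = last us" using vs us by simp
    ultimately show ?thesis using vs o IH False us by (simp add: path_image_join cycle_image_def)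
  qed
qed

lemma cycle_images_inter_subset:
  assumes "set xs \<subseteq> E" "set ys \<subseteq> E" "set xs \<inter> set ys = {}"
  shows "cycle_image g xs \<inter> cycle_image g ys
           \<subseteq> pos ` ((\<Union>e\<in>set xs. {bl e, wh e}) \<inter> (\<Union>e\<in>set ys. {bl e, wh e}))"
proof
  fix x assume "x \<in> cycle_image g xs \<inter> cycle_image g ys"
  then obtain e e' where ee: "e \<in> set xs" "e' \<in> set ys" "x \<in> path_image (g e)" "x \<in> path_image (g e')"
    by (auto simp: cycle_image_def)
  then have "e \<noteq> e'" using assms(3) by blast
  then have "x \<in> pos ` ({bl e, wh e} \<inter> {bl e', wh e'})"
    using edges_meet_at_common_ends ee assms(1,2) by blast
  then show "x \<in> pos ` ((\<Union>e\<in>set xs. {bl e, wh e}) \<inter> (\<Union>e\<in>set ys. {bl e, wh e}))"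
    using ee(1,2) by blast
qed

lemma walk_images_inter:
  assumes A: "simple_walk E bl wh vsA esA" and Bw: "simple_walk E bl wh vsB esB"
    and ne: "esA \<noteq> []" "esB \<noteq> []" and d: "set esA \<inter> set esB = {}"
  shows "cycle_image g esA \<inter> cycle_image g esB = pos ` (set vsA \<inter> set vsB)"
proof
  show "cycle_image g esA \<inter> cycle_image g esB \<subseteq> pos ` (set vsA \<inter> set vsB)"
    using cycle_images_inter_subset[OF simple_walkD(3)[OF A] simple_walkD(3)[OF Bw] d]
      simple_walk_vertices[OF A ne(1)] simple_walk_vertices[OF Bw ne(2)] by simp
  show "pos ` (set vsA \<inter> set vsB) \<subseteq> cycle_image g esA \<inter> cycle_image g esB"
  proof
    fix x assume "x \<in> pos ` (set vsA \<inter> set vsB)"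
    then obtain v where v: "v \<in> set vsA" "v \<in> set vsB" "x = pos v" by blast
    obtain e where e: "e \<in> set esA" "v = bl e \<or> v = wh e" using simple_walk_vertices[OF A ne(1)] v(1) by auto
    obtain e' where e': "e' \<in> set esB" "v = bl e' \<or> v = wh e'" using simple_walk_vertices[OF Bw ne(2)] v(2) by auto
    have eE: "e \<in> E" "e' \<in> E" using e e' A Bw simple_walkD(3) by blast+
    have "x \<in> path_image (g e)" using e(2) edge_ends_on_edge[OF eE(1)] v(3) by auto
    moreover have "x \<in> path_image (g e')" using e'(2) edge_ends_on_edge[OF eE(2)] v(3) by auto
    ultimately show "x \<in> cycle_image g esA \<inter> cycle_image g esB"
      using e(1) e'(1) unfolding cycle_image_def by blast
  qed
qed

lemma walk_paths_loop:
  assumes A: "simple_walk E bl wh vsA esA" and Bw: "simple_walk E bl wh vsB esB"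
    and ne: "esA \<noteq> []" "esB \<noteq> []" and d: "set esA \<inter> set esB = {}"
    and e1: "last vsA = hd vsB" and e2: "last vsB = hd vsA"
    and vint: "set vsA \<inter> set vsB \<subseteq> {hd vsA, hd vsB}"
  shows "simple_path (walk_path g bl vsA esA +++ walk_path g bl vsB esB)"
    "pathfinish (walk_path g bl vsA esA +++ walk_path g bl vsB esB) = pathstart (walk_path g bl vsA esA +++ walk_path g bl vsB esB)"
    "path_image (walk_path g bl vsA esA +++ walk_path g bl vsB esB) = cycle_image g esA \<union> cycle_image g esB"
proof -
  note a = arc_walk_path[OF A ne(1)] and b = arc_walk_path[OF Bw ne(2)]
  have "path_image (walk_path g bl vsA esA) \<inter> path_image (walk_path g bl vsB esB) \<subseteq> {pathstart (walk_path g bl vsA esA), pathstart (walk_path g bl vsB esB)}"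
    using a b walk_images_inter[OF A Bw ne d] vint by auto
  then show "simple_path (walk_path g bl vsA esA +++ walk_path g bl vsB esB)"
    using a b e1 e2 by (intro simple_path_join_loop) auto
  show "pathfinish (walk_path g bl vsA esA +++ walk_path g bl vsB esB) = pathstart (walk_path g bl vsA esA +++ walk_path g bl vsB esB)"
    using a b e2 by simp
  show "path_image (walk_path g bl vsA esA +++ walk_path g bl vsB esB) = cycle_image g esA \<union> cycle_image g esB"
    using a b e1 by (simp add: path_image_join)
qed

lemma cycle_image_simple_loop:
  assumes c: "simple_cycle E bl wh vs es"
  shows "\<exists>p. simple_path p \<and> pathfinish p = pathstart p \<and> path_image p = cycle_image g es"
proof -
  have b: "0 < (1::nat)" "1 < length es" using c by (auto simp: simple_cycle_def)
  note s = simple_cycle_split[OF c b]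
  let ?p = "walk_path g bl (take 2 vs) (take 1 es) +++ walk_path g bl (drop 1 vs @ [hd vs]) (drop 1 es)"
  have "simple_path ?p" "pathfinish ?p = pathstart ?p"
    "path_image ?p = cycle_image g (take 1 es) \<union> cycle_image g (drop 1 es)"
    using walk_paths_loop[OF s(1,2,3,4,5)] s by (simp_all add: numeral_2_eq_2)
  moreover have "cycle_image g (take 1 es) \<union> cycle_image g (drop 1 es) = cycle_image g es"
    using s(11) by (auto simp: cycle_image_def)
  ultimately show ?thesis by metis
qed

lemma cycle_image_subset_drawing: "simple_cycle E bl wh vs es \<Longrightarrow> cycle_image g es \<subseteq> G"
  unfolding cycle_image_def simple_cycle_def graph_set_def by blast

lemma cycle_jordan:
  assumes c: "simple_cycle E bl wh vs es"
  defines "J \<equiv> cycle_image g es"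
  shows "inside J \<noteq> {}" "open (inside J)" "connected (inside J)" "bounded (inside J)"
    "frontier (inside J) = J" "inside J \<inter> J = {}" "closure (inside J) = inside J \<union> J" "closed J"
proof -
  obtain p where p: "simple_path p" "pathfinish p = pathstart p" "path_image p = J"
    using cycle_image_simple_loop[OF c] J_def by blast
  note j = Jordan_inside_outside[OF p(1,2), unfolded p(3)]
  show "inside J \<noteq> {}" "open (inside J)" "connected (inside J)" "bounded (inside J)"
    "frontier (inside J) = J" using j by auto
  show "inside J \<inter> J = {}" by simp
  show "closure (inside J) = inside J \<union> J"
    using j by (metis closure_Un_frontier)
  have "closed (path_image p)" by (rule closed_path_image[OF simple_path_imp_path[OF p(1)]])
  then show "closed J" using p(3) by simp
qed

lemma cilium_notin_drawing:
  assumes vc: "valid_cilia V E pos g cil" and v: "v \<in> V"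
  shows "cil v \<notin> G"
proof -
  have "closed_segment (pos v) (cil v) \<inter> G = {pos v}" "cil v \<noteq> pos v" using vc v by (simp_all add: valid_cilia_def)
  then show ?thesis by auto
qed

lemma cilium_inside_iff:
  assumes vc: "valid_cilia V E pos g cil" and v: "v \<in> V" and JG: "J \<subseteq> G" and pv: "pos v \<notin> J"
  shows "cil v \<in> inside J \<longleftrightarrow> pos v \<in> inside J"
proof -
  let ?S = "closed_segment (pos v) (cil v)"
  have "?S \<inter> G = {pos v}" using vc v by (simp add: valid_cilia_def)
  then have "?S \<inter> J \<subseteq> {pos v}" using JG by blast
  then have SJ: "?S \<inter> J = {}" using pv by blast
  show ?thesis
  proof
    assume "cil v \<in> inside J"
    then have "?S \<subseteq> inside J" using connected_subset_inside[OF connected_segment SJ] by blast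
    then show "pos v \<in> inside J" by auto
  next
    assume "pos v \<in> inside J"
    then have "?S \<subseteq> inside J" using connected_subset_inside[OF connected_segment SJ] by blast
    then show "cil v \<in> inside J" by auto
  qed
qed

lemma even_cycle_length:
  assumes c: "simple_cycle E bl wh vs es"
  shows "even (length es)"
proof -
  let ?m = "length es"
  have m2: "2 \<le> ?m" and sE: "set es \<subseteq> E"
    and cond: "\<forall>i<?m. {bl (es!i), wh (es!i)} = {vs!i, vs!((i+1) mod ?m)}"
    using c by (simp_all add: simple_cycle_def)
  have step: "vs!i \<in> B \<longleftrightarrow> vs!((i+1) mod ?m) \<notin> B" if i: "i < ?m" for i
  proof -
    have eE: "es!i \<in> E" using sE i by auto
    have "bl (es!i) \<in> B" "wh (es!i) \<in> W" "wh (es!i) \<notin> B" using bl_black[OF eE] wh_white[OF eE] black_white_disjoint by auto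
    moreover have "{bl (es!i), wh (es!i)} = {vs!i, vs!((i+1) mod ?m)}" using cond i by simp
    ultimately show ?thesis by (auto simp: doubleton_eq_iff)
  qed
  have ind: "i < ?m \<Longrightarrow> (vs!i \<in> B \<longleftrightarrow> (vs!0 \<in> B \<longleftrightarrow> even i))" for i
  proof (induction i)
    case 0 then show ?case by simp
  next
    case (Suc i)
    then have "i < ?m" by simp
    then have "vs!i \<in> B \<longleftrightarrow> vs!(Suc i) \<notin> B" using step[of i] Suc.prems by simp
    then show ?case using Suc by auto
  qed
  have "?m - 1 + 1 = ?m" using m2 by simp
  then have "?m - 1 < ?m" "(?m - 1 + 1) mod ?m = 0" using m2 by simp_all
  then have "vs!(?m - 1) \<in> B \<longleftrightarrow> vs!0 \<notin> B" using step[of "?m - 1"] by simp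
  moreover have "vs!(?m - 1) \<in> B \<longleftrightarrow> (vs!0 \<in> B \<longleftrightarrow> even (?m - 1))" using ind[of "?m - 1"] m2 by simp
  ultimately have "odd (?m - 1)" by (cases "vs!0 \<in> B") auto
  then show ?thesis using m2 by (simp add: even_diff_nat)
qed

lemma edge_ends_subset_vertices: "set es \<subseteq> E \<Longrightarrow> (\<Union>e\<in>set es. {bl e, wh e}) \<subseteq> V"
proof
  fix v assume "set es \<subseteq> E" "v \<in> (\<Union>e\<in>set es. {bl e, wh e})"
  then obtain e where "e \<in> E" "v = bl e \<or> v = wh e" by auto
  then show "v \<in> V" using edge_ends_vertices[of e] by auto
qed

lemma simple_cycle_vertices_subset: "simple_cycle E bl wh vs es \<Longrightarrow> set vs \<subseteq> V"
  using simple_cycle_vertices[of E bl wh vs es] edge_ends_subset_vertices[of es] unfolding simple_cycle_def by simp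

lemma simple_walk_vertices_subset: "simple_walk E bl wh vs es \<Longrightarrow> es \<noteq> [] \<Longrightarrow> set vs \<subseteq> V"
  using simple_walk_vertices[of E bl wh vs es] edge_ends_subset_vertices[of es] simple_walkD(3)[of E bl wh vs es] by simp

lemma pos_in_cycle_image_iff_edge_end:
  assumes "set es \<subseteq> E" "v \<in> V"
  shows "pos v \<in> cycle_image g es \<longleftrightarrow> (\<exists>e\<in>set es. v = bl e \<or> v = wh e)"
  using assms vertex_on_edge edge_ends_on_edge unfolding cycle_image_def by blast

lemma pos_in_cycle_image_iff:
  assumes "simple_cycle E bl wh vs es" "v \<in> V"
  shows "pos v \<in> cycle_image g es \<longleftrightarrow> v \<in> set vs"
  using pos_in_cycle_image_iff_edge_end[OF _ assms(2), of es] simple_cycle_vertices[OF assms(1)] assms(1)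
  by (auto simp: simple_cycle_def)

lemma pos_in_walk_image_iff:
  assumes "simple_walk E bl wh vs es" "es \<noteq> []" "v \<in> V"
  shows "pos v \<in> cycle_image g es \<longleftrightarrow> v \<in> set vs"
  using pos_in_cycle_image_iff_edge_end[OF simple_walkD(3)[OF assms(1)] assms(3)]
    simple_walk_vertices[OF assms(1,2)] by auto

lemma chord_image_inside:
  assumes c: "simple_cycle E bl wh vs es" and P: "simple_walk E bl wh vsP esP" "esP \<noteq> []"
    and edges: "set esP \<inter> set es = {}" and verts: "set vsP \<inter> set vs = {hd vsP, last vsP}"
    and sub: "cycle_image g esP \<subseteq> cycle_inside es \<union> cycle_image g es"
  shows "cycle_image g esP - {pos (hd vsP), pos (last vsP)} \<subseteq> cycle_inside es"
proof -
  have "cycle_image g esP \<inter> cycle_image g es \<subseteq> pos ` (set vsP \<inter> set vs)"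
    using cycle_images_inter_subset[OF simple_walkD(3)[OF P(1)] _ edges] c
      simple_walk_vertices[OF P] simple_cycle_vertices[OF c] by (simp add: simple_cycle_def)
  then show ?thesis using sub verts by auto
qed

lemma walk_theta_inside:
  assumes A: "simple_walk E bl wh vsA esA" and B: "simple_walk E bl wh vsB esB"
    and P: "simple_walk E bl wh vsP esP"
    and ne: "esA \<noteq> []" "esB \<noteq> []" "esP \<noteq> []"
    and starts: "hd vsA = u" "hd vsB = u" "hd vsP = u"
    and ends: "last vsA = w" "last vsB = w" "last vsP = w"
    and edges: "set esA \<inter> set esB = {}" "set esA \<inter> set esP = {}" "set esB \<inter> set esP = {}"
    and verts: "set vsA \<inter> set vsB = {u, w}" "set vsA \<inter> set vsP = {u, w}" "set vsB \<inter> set vsP = {u, w}"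
    and meets: "cycle_image g esP \<inter> inside (cycle_image g esA \<union> cycle_image g esB) \<noteq> {}"
  shows "inside (cycle_image g esA \<union> cycle_image g esP) \<inter> inside (cycle_image g esB \<union> cycle_image g esP) = {}"
    and "inside (cycle_image g esA \<union> cycle_image g esP) \<union> inside (cycle_image g esB \<union> cycle_image g esP)
           \<union> (cycle_image g esP - {pos u, pos w}) = inside (cycle_image g esA \<union> cycle_image g esB)"
proof -
  note a = arc_walk_path[OF A ne(1)] and b = arc_walk_path[OF B ne(2)] and p = arc_walk_path[OF P ne(3)]
  have "vsP \<noteq> []" using P by (auto simp: simple_walk_def)
  then have "u \<in> V" "w \<in> V" "u \<noteq> w"
    using simple_walk_vertices_subset[OF P ne(3)] simple_walk_hd_neq_last[OF P ne(3)] starts(3) ends(3)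
    by (auto intro: hd_in_set last_in_set)
  then have uw: "pos u \<noteq> pos w" using inj_pos by (auto dest: inj_onD)
  note meet = walk_images_inter[OF A B ne(1,2) edges(1)] walk_images_inter[OF A P ne(1,3) edges(2)]
    walk_images_inter[OF B P ne(2,3) edges(3)]
  show "inside (cycle_image g esA \<union> cycle_image g esP) \<inter> inside (cycle_image g esB \<union> cycle_image g esP) = {}"
    and "inside (cycle_image g esA \<union> cycle_image g esP) \<union> inside (cycle_image g esB \<union> cycle_image g esP)
           \<union> (cycle_image g esP - {pos u, pos w}) = inside (cycle_image g esA \<union> cycle_image g esB)"
    using split_inside_simple_closed_curve[of "walk_path g bl vsA esA" "pos u" "pos w"
        "walk_path g bl vsB esB" "walk_path g bl vsP esP"]
      a b p starts ends uw meet verts meets by (auto simp: arc_imp_simple_path)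
qed

end

section \<open>Faces and chords\<close>

context plane_graph
begin

lemma face_touching_cycle_edge:
  assumes c: "simple_cycle E bl wh vs es" and e0: "e0 \<in> set es"
  obtains f z where "f \<in> components (- G)" "f \<subseteq> cycle_inside es" "z \<in> frontier f"
    "z \<in> path_image (g e0)" "z \<notin> pos ` V"
proof -
  note jc = cycle_jordan[OF c]
  have JG: "cycle_image g es \<subseteq> G" by (rule cycle_image_subset_drawing[OF c])
  have e0E: "e0 \<in> E" using e0 c by (auto simp: simple_cycle_def)
  define x where "x = g e0 (1/2)"
  obtain r where r: "r > 0" "ball x r \<inter> G \<subseteq> path_image (g e0)" "ball x r \<inter> pos ` V = {}"
    using edge_midpoint_isolated[OF e0E] unfolding x_def by blast
  have xJ: "x \<in> cycle_image g es"
    using edge_midpoint(1)[OF e0E] e0 unfolding x_def cycle_image_def by blast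
  then have "x \<in> closure (cycle_inside es)" using jc(7) by blast
  then obtain y where y: "y \<in> cycle_inside es" "dist y x < r"
    using r(1) by (auto simp: closure_approachable)
  have yb: "y \<in> ball x r" using y(2) by (simp add: dist_commute)
  have "y \<notin> G"
    using r(2) yb y(1) e0 inside_no_overlap unfolding cycle_image_def by blast
  define f where "f = connected_component_set (- G) y"
  have fc: "f \<in> components (- G)" and yf: "y \<in> f" and fG: "f \<inter> G = {}"
    using \<open>y \<notin> G\<close> connected_component_subset unfolding f_def by (auto simp: components_iff)
  have fI: "f \<subseteq> cycle_inside es"
    using connected_subset_inside[of f] fG JG y(1) yf unfolding f_def by blast
  have "ball x r \<inter> frontier f \<noteq> {}"
  proof (rule connected_Int_frontier)
    show "ball x r - f \<noteq> {}" using r(1) xJ JG fG centre_in_ball[of x r] by blast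
  qed (use yb yf in auto)
  then obtain z where z: "z \<in> ball x r" "z \<in> frontier f" by blast
  moreover have "frontier f \<subseteq> G"
    by (rule frontier_of_components_closed_complement[OF closed_drawing fc])
  ultimately show thesis using that[OF fc fI z(2)] r by blast
qed

lemma face_inside_cycle_eq:
  assumes c: "simple_cycle E bl wh vs es" and f: "f \<in> components (- G)"
    and fI: "f \<subseteq> cycle_inside es" and fJ: "frontier f \<subseteq> cycle_image g es"
  shows "f = cycle_inside es"
proof -
  note jc = cycle_jordan[OF c]
  have "cycle_inside es \<inter> closure f = f"
    unfolding closure_Un_frontier[of f] using fJ fI jc(6) by blast
  then have "closedin (top_of_set (cycle_inside es)) f"
    by (metis closedin_closed closed_closure inf_commute)
  moreover have "open f" using f closed_drawing by (meson open_Compl open_components)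
  then have "openin (top_of_set (cycle_inside es)) f" using fI by (simp add: openin_open_eq jc(2))
  moreover have "f \<noteq> {}" using f in_components_nonempty by blast
  ultimately show ?thesis using jc(3) connected_clopen by blast
qed

lemma inside_cycle_face:
  assumes c: "simple_cycle E bl wh vs es" and empty: "cycle_inside es \<inter> G = {}"
  shows "cycle_inside es \<in> components (- G)"
  unfolding in_components_maximal
proof (intro conjI allI impI)
  note jc = cycle_jordan[OF c]
  show "cycle_inside es \<noteq> {}" "connected (cycle_inside es)" "cycle_inside es \<subseteq> - G"
    using jc empty by auto
  fix D assume D: "D \<noteq> {} \<and> cycle_inside es \<subseteq> D \<and> D \<subseteq> - G \<and> connected D"
  then have "D \<subseteq> cycle_inside es"
    using connected_subset_inside[of D] cycle_image_subset_drawing[OF c] jc(1) by blast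
  then show "D = cycle_inside es" using D by blast
qed

lemma face_edges_inside_cycle:
  assumes c: "simple_cycle E bl wh vs es"
  shows "face_edges E g (cycle_inside es) = set es"
proof
  have sub: "set es \<subseteq> E" using c by (simp add: simple_cycle_def)
  show "face_edges E g (cycle_inside es) \<subseteq> set es"
  proof
    fix e assume "e \<in> face_edges E g (cycle_inside es)"
    then have e: "e \<in> E" "path_image (g e) \<subseteq> cycle_image g es"
      using cycle_jordan(5)[OF c] by (auto simp: face_edges_def)
    then obtain e' where "e' \<in> set es" "g e (1/2) \<in> path_image (g e')"
      using edge_midpoint(1)[OF e(1)] unfolding cycle_image_def by blast
    then show "e \<in> set es"
      using edge_eq_at_non_vertex[OF e(1) _ edge_midpoint(1)[OF e(1)] _ edge_midpoint(2)[OF e(1)]] sub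
      by blast
  qed
  show "set es \<subseteq> face_edges E g (cycle_inside es)"
    using sub cycle_jordan(5)[OF c] by (auto simp: face_edges_def cycle_image_def)
qed

end

locale plane_graph_simple_faces = plane_graph +
  assumes bounded_faces: "bounded_faces_simple B W E bl wh pos g"
begin

lemma inner_face_at_edge:
  assumes c: "simple_cycle E bl wh vs es" and nonempty: "cycle_inside es \<inter> G \<noteq> {}" and e0: "e0 \<in> set es"
  obtains vs' es' where "simple_cycle E bl wh vs' es'" "e0 \<in> set es'" "\<not> set es' \<subseteq> set es"
    "cycle_image g es' \<subseteq> cycle_inside es \<union> cycle_image g es"
proof -
  obtain f z where f: "f \<in> components (- G)" "f \<subseteq> cycle_inside es"
    and z: "z \<in> frontier f" "z \<in> path_image (g e0)" "z \<notin> pos ` V"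
    by (rule face_touching_cycle_edge[OF c e0])
  have "bounded f" using f(2) cycle_jordan(4)[OF c] bounded_subset by blast
  then obtain vs' es' where c': "simple_cycle E bl wh vs' es'" and ff: "frontier f = cycle_image g es'"
    using bounded_faces f(1) unfolding bounded_faces_simple_def by blast
  obtain e' where e': "e' \<in> set es'" "z \<in> path_image (g e')"
    using z(1) ff unfolding cycle_image_def by blast
  have "e0 = e'"
    using edge_eq_at_non_vertex[OF _ _ z(2) e'(2) z(3)] e0 e'(1) c c' by (auto simp: simple_cycle_def)
  moreover have "\<not> set es' \<subseteq> set es"
  proof
    assume "set es' \<subseteq> set es"
    then have "frontier f \<subseteq> cycle_image g es" using ff unfolding cycle_image_def by blast
    then have "f = cycle_inside es" by (rule face_inside_cycle_eq[OF c f])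
    moreover have "f \<inter> G = {}" using f(1) in_components_subset by blast
    ultimately show False using nonempty by simp
  qed
  moreover have "frontier f \<subseteq> closure (cycle_inside es)"
    using closure_mono[OF f(2)] by (simp add: frontier_def) blast
  ultimately show thesis
    using that[OF c'] e'(1) ff cycle_jordan(7)[OF c] by simp
qed

lemma inner_chord_exists:
  assumes c: "simple_cycle E bl wh vs es" and nonempty: "cycle_inside es \<inter> G \<noteq> {}"
  obtains vsP esP where "simple_walk E bl wh vsP esP" "esP \<noteq> []" "set esP \<inter> set es = {}"
    "set vsP \<inter> set vs = {hd vsP, last vsP}"
    "cycle_image g esP - {pos (hd vsP), pos (last vsP)} \<subseteq> cycle_inside es"
proof -
  have e0: "es ! 0 \<in> set es" using c by (cases es) (auto simp: simple_cycle_def)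
  then obtain vs1 es1 where c1: "simple_cycle E bl wh vs1 es1" and "es ! 0 \<in> set es1"
    and "\<not> set es1 \<subseteq> set es" and sub1: "cycle_image g es1 \<subseteq> cycle_inside es \<union> cycle_image g es"
    by (rule inner_face_at_edge[OF c nonempty])
  then obtain vs' es' where c': "simple_cycle E bl wh vs' es'" and "set es' = set es1"
    and first: "es' ! 0 \<notin> set es" and last_on: "last es' \<in> set es"
    using simple_cycle_rotate_leaving[OF c1, of "set es"] e0 by blast
  then have sub: "cycle_image g es' \<subseteq> cycle_inside es \<union> cycle_image g es"
    using sub1 by (simp add: cycle_image_def)
  obtain j where j: "0 < j" "j < length es'" "vs' ! 0 \<in> set vs" "vs' ! j \<in> set vs"
    and between: "\<And>t. 0 < t \<Longrightarrow> t < j \<Longrightarrow> vs' ! t \<notin> set vs"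
    using simple_cycle_first_return[OF c c' last_on] by blast
  note P = simple_cycle_split_walks(1)[OF c' j(1,2)]
  have ne: "take j es' \<noteq> []" using j(1,2) by auto
  have "cycle_image g (take j es') \<subseteq> cycle_image g es'"
    unfolding cycle_image_def by (meson UN_mono order_refl set_take_subset)
  then show thesis
    using that[OF P ne] simple_cycle_prefix_chord[OF c c' j(1,2) first j(3,4) between]
      chord_image_inside[OF c P ne] sub by blast
qed

end

section \<open>Kasteleyn signs along cycles\<close>

locale kasteleyn_graph = plane_graph_simple_faces B W E bl wh pos g
  for B W :: "'v set" and E :: "'e set" and bl wh :: "'e \<Rightarrow> 'v"
    and pos :: "'v \<Rightarrow> complex" and g :: "'e \<Rightarrow> real \<Rightarrow> complex" +
  fixes n :: "'v \<Rightarrow> nat" and cil :: "'v \<Rightarrow> complex" and \<epsilon> :: "'e \<Rightarrow> int"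
  assumes cilia: "valid_cilia (B \<union> W) E pos g cil"
    and kasteleyn_signs: "kasteleyn (B \<union> W) E pos g n cil \<epsilon>"
begin

definition cycle_sign_law :: "'v list \<Rightarrow> 'e list \<Rightarrow> bool" where
  "cycle_sign_law vs es \<longleftrightarrow> (\<Prod>e\<in>set es. \<epsilon> e) =
     (-1) ^ (length es div 2 + 1
             + card {v\<in>set vs. even (n v) \<and> cil v \<in> cycle_inside es}
             + (\<Sum>v\<in>{v\<in>V. pos v \<in> cycle_inside es}. n v))"

definition interior_edges :: "'e list \<Rightarrow> nat" where
  "interior_edges es = card {e\<in>E. path_image (g e) \<inter> cycle_inside es \<noteq> {}}"

lemma sign_values: "e \<in> E \<Longrightarrow> \<epsilon> e = 1 \<or> \<epsilon> e = -1"
  using kasteleyn_signs by (simp add: kasteleyn_def)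

lemma sign_prod_square:
  assumes "set xs \<subseteq> E"
  shows "(\<Prod>e\<in>set xs. \<epsilon> e) * (\<Prod>e\<in>set xs. \<epsilon> e) = 1"
proof -
  have "(\<Prod>e\<in>set xs. \<epsilon> e) * (\<Prod>e\<in>set xs. \<epsilon> e) = (\<Prod>e\<in>set xs. \<epsilon> e * \<epsilon> e)"
    by (rule prod.distrib[symmetric])
  also have "\<dots> = 1"
    using assms sign_values by (intro prod.neutral) fastforce
  finally show ?thesis .
qed

lemma cycle_sign_law_empty_interior:
  assumes c: "simple_cycle E bl wh vs es" and empty: "cycle_inside es \<inter> G = {}"
  shows "cycle_sign_law vs es"
proof -
  note jc = cycle_jordan[OF c]
  have "(\<Prod>e\<in>face_edges E g (cycle_inside es). \<epsilon> e) =
          (-1) ^ (card (face_edges E g (cycle_inside es)) div 2 + 1 +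
                  card {v\<in>V. pos v \<in> frontier (cycle_inside es) \<and> even (n v) \<and> cil v \<in> cycle_inside es})"
    using kasteleyn_signs inside_cycle_face[OF c empty] jc(4) unfolding kasteleyn_def by blast
  then have "(\<Prod>e\<in>set es. \<epsilon> e) =
          (-1) ^ (card (set es) div 2 + 1 +
                  card {v\<in>V. pos v \<in> cycle_image g es \<and> even (n v) \<and> cil v \<in> cycle_inside es})"
    unfolding face_edges_inside_cycle[OF c] jc(5) .
  moreover have "card (set es) = length es" using c by (simp add: simple_cycle_def distinct_card)
  moreover have "{v\<in>V. pos v \<in> cycle_image g es \<and> even (n v) \<and> cil v \<in> cycle_inside es}
                 = {v\<in>set vs. even (n v) \<and> cil v \<in> cycle_inside es}"
    using pos_in_cycle_image_iff[OF c] simple_cycle_vertices_subset[OF c] by blast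
  moreover have "(\<Sum>v\<in>{v\<in>V. pos v \<in> cycle_inside es}. n v) = 0"
    using empty unfolding graph_set_def by (intro sum.neutral) blast
  ultimately show ?thesis unfolding cycle_sign_law_def by (simp only:) simp
qed

lemma cilium_outside_inner_cycle:
  assumes c: "simple_cycle E bl wh vs es" and c': "simple_cycle E bl wh vs' es'"
    and sub: "cycle_inside es' \<subseteq> cycle_inside es" and v: "v \<in> set vs" "v \<notin> set vs'"
  shows "cil v \<notin> cycle_inside es'"
proof -
  have vV: "v \<in> V" using v(1) simple_cycle_vertices_subset[OF c] by blast
  have "pos v \<notin> cycle_image g es'" using pos_in_cycle_image_iff[OF c' vV] v(2) by simp
  then have "cil v \<in> cycle_inside es' \<longleftrightarrow> pos v \<in> cycle_inside es'"
    by (rule cilium_inside_iff[OF cilia vV cycle_image_subset_drawing[OF c']])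
  moreover have "pos v \<notin> cycle_inside es"
    using pos_in_cycle_image_iff[OF c vV] v(1) inside_no_overlap by blast
  ultimately show ?thesis using sub by blast
qed

lemma interior_edges_less:
  assumes sub: "cycle_inside es' \<subseteq> cycle_inside es" and e: "e \<in> E"
    and on: "path_image (g e) \<subseteq> cycle_image g es'" and meets: "path_image (g e) \<inter> cycle_inside es \<noteq> {}"
  shows "interior_edges es' < interior_edges es"
  unfolding interior_edges_def
proof (rule psubset_card_mono)
  show "finite {e\<in>E. path_image (g e) \<inter> cycle_inside es \<noteq> {}}" using finite_edges by simp
  have "e \<notin> {e\<in>E. path_image (g e) \<inter> cycle_inside es' \<noteq> {}}"
    using on inside_no_overlap by blast
  then show "{e\<in>E. path_image (g e) \<inter> cycle_inside es' \<noteq> {}} \<subset> {e\<in>E. path_image (g e) \<inter> cycle_inside es \<noteq> {}}"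
    using sub e meets by blast
qed

end

lemma exponent_parity_split:
  fixes L L1 L2 a c p k k1 k2 t N N1 N2 m i :: nat
  assumes "k1 + k2 = k + t" "N = N1 + N2 + m" "i = p - 1"
    "L1 = a + p" "L2 = p + c" "L = a + c" "even L" "even L1" "even L2" "even (t + m + i)" "1 \<le> p"
  shows "even ((L1 div 2 + 1 + k1 + N1) + (L2 div 2 + 1 + k2 + N2) + (L div 2 + 1 + k + N))"
  using assms by presburger

locale chord_split = kasteleyn_graph B W E bl wh pos g n cil \<epsilon>
  for B W :: "'v set" and E :: "'e set" and bl wh :: "'e \<Rightarrow> 'v"
    and pos :: "'v \<Rightarrow> complex" and g :: "'e \<Rightarrow> real \<Rightarrow> complex"
    and n :: "'v \<Rightarrow> nat" and cil :: "'v \<Rightarrow> complex" and \<epsilon> :: "'e \<Rightarrow> int" +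
  fixes vs vsP :: "'v list" and es esP :: "'e list" and b :: nat
  assumes cycle: "simple_cycle E bl wh vs es"
    and chord: "simple_walk E bl wh vsP esP" and chord_nonempty: "esP \<noteq> []"
    and chord_edges: "set esP \<inter> set es = {}"
    and chord_vertices: "set vsP \<inter> set vs = {hd vsP, last vsP}"
    and chord_inside: "cycle_image g esP - {pos (hd vsP), pos (last vsP)} \<subseteq> cycle_inside es"
    and chord_start: "hd vsP = hd vs"
    and split_index: "0 < b" "b < length es"
    and chord_end: "last vsP = vs ! b"
begin

definition vsA :: "'v list" where "vsA = take (Suc b) vs"
definition esA :: "'e list" where "esA = take b es"
definition vsB :: "'v list" where "vsB = drop b vs @ [hd vs]"
definition esB :: "'e list" where "esB = drop b es"
definition vs1 :: "'v list" where "vs1 = butlast vsA @ butlast (rev vsP)"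
definition es1 :: "'e list" where "es1 = esA @ rev esP"
definition vs2 :: "'v list" where "vs2 = butlast vsP @ butlast vsB"
definition es2 :: "'e list" where "es2 = esP @ esB"
definition chord_inner :: "'v set" where "chord_inner = set vsP - {hd vsP, last vsP}"

lemma arcs:
  "simple_walk E bl wh vsA esA" "simple_walk E bl wh vsB esB" "esA \<noteq> []" "esB \<noteq> []"
  "set esA \<inter> set esB = {}" "last vsA = last vsP" "hd vsB = last vsP" "last vsB = hd vsP"
  "hd vsA = hd vsP" "set vsA \<inter> set vsB = {hd vsP, last vsP}" "set esA \<union> set esB = set es"
  "set vsA \<union> set vsB = set vs"
  using simple_cycle_split[OF cycle split_index] chord_start chord_end
  unfolding vsA_def esA_def vsB_def esB_def by simp_all

lemma chord_ends: "hd vsP \<noteq> last vsP" "hd vsP \<in> V" "last vsP \<in> V"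
  "pos (hd vsP) \<noteq> pos (last vsP)"
proof -
  have "vsP \<noteq> []" using chord by (auto simp: simple_walk_def)
  then show "hd vsP \<noteq> last vsP" "hd vsP \<in> V" "last vsP \<in> V"
    using simple_walk_hd_neq_last[OF chord chord_nonempty]
      simple_walk_vertices_subset[OF chord chord_nonempty] by (auto intro: hd_in_set last_in_set)
  then show "pos (hd vsP) \<noteq> pos (last vsP)" using inj_pos by (auto dest: inj_onD)
qed

lemma arcs_meet_chord:
  "set vsA \<inter> set vsP = {hd vsP, last vsP}" "set vsB \<inter> set vsP = {hd vsP, last vsP}"
  "set esA \<inter> set esP = {}" "set esB \<inter> set esP = {}"
proof -
  have "vsA \<noteq> []" "vsB \<noteq> []" "vsP \<noteq> []"
    using arcs(1,2) chord by (auto simp: simple_walk_def)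
  then have "{hd vsP, last vsP} \<subseteq> set vsA" "{hd vsP, last vsP} \<subseteq> set vsB"
    "{hd vsP, last vsP} \<subseteq> set vsP"
    using arcs(6-9) by (metis empty_subsetI hd_in_set insert_subset last_in_set)+
  then show "set vsA \<inter> set vsP = {hd vsP, last vsP}" "set vsB \<inter> set vsP = {hd vsP, last vsP}"
    using arcs(12) chord_vertices by blast+
  show "set esA \<inter> set esP = {}" "set esB \<inter> set esP = {}"
    using arcs(11) chord_edges by blast+
qed

lemma split_cycles: "simple_cycle E bl wh vs1 es1" "simple_cycle E bl wh vs2 es2"
proof -
  have "vsP \<noteq> []" using chord by (auto simp: simple_walk_def)
  then show "simple_cycle E bl wh vs1 es1"
    unfolding vs1_def es1_def
    using arcs arcs_meet_chord chord_nonempty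
    by (intro simple_cycle_join_walks[OF arcs(1) simple_walk_rev[OF chord]])
      (auto simp: hd_rev last_rev)
  show "simple_cycle E bl wh vs2 es2"
    unfolding vs2_def es2_def
    using arcs arcs_meet_chord chord_nonempty
    by (intro simple_cycle_join_walks[OF chord arcs(2)]) auto
qed

lemma split_vertices: "set vs1 = set vsA \<union> set vsP" "set vs2 = set vsP \<union> set vsB"
proof -
  have "vsP \<noteq> []" using chord by (auto simp: simple_walk_def)
  then show "set vs1 = set vsA \<union> set vsP"
    unfolding vs1_def using arcs chord_nonempty
    by (subst set_join_walks[OF arcs(1) simple_walk_rev[OF chord]]) (auto simp: hd_rev last_rev)
  show "set vs2 = set vsP \<union> set vsB"
    unfolding vs2_def using arcs chord_nonempty by (intro set_join_walks[OF chord arcs(2)]) auto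
qed

lemma split_images:
  "cycle_image g es = cycle_image g esA \<union> cycle_image g esB"
  "cycle_image g es1 = cycle_image g esA \<union> cycle_image g esP"
  "cycle_image g es2 = cycle_image g esB \<union> cycle_image g esP"
  using arcs(11) unfolding es1_def es2_def cycle_image_def by auto

lemma chord_midpoint_inside:
  assumes "e \<in> set esP"
  shows "g e (1/2) \<in> cycle_inside es"
proof -
  have eE: "e \<in> E" using assms simple_walkD(3)[OF chord] by blast
  have "g e (1/2) \<in> cycle_image g esP" using edge_midpoint(1)[OF eE] assms
    unfolding cycle_image_def by blast
  moreover have "g e (1/2) \<noteq> pos (hd vsP)" "g e (1/2) \<noteq> pos (last vsP)"
    using edge_midpoint(2)[OF eE] chord_ends by auto
  ultimately show ?thesis using chord_inside by blast
qed

lemma split_interiors: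
  "cycle_inside es1 \<inter> cycle_inside es2 = {}"
  "cycle_inside es = cycle_inside es1 \<union> cycle_inside es2 \<union> (cycle_image g esP - {pos (hd vsP), pos (last vsP)})"
proof -
  obtain e where e: "e \<in> set esP" using chord_nonempty by (cases esP) auto
  have ne: "rev esB \<noteq> []" using arcs(4) by simp
  have "vsB \<noteq> []" using arcs(2) by (auto simp: simple_walk_def)
  then have rB: "hd (rev vsB) = hd vsP" "last (rev vsB) = last vsP"
    using arcs(7,8) by (simp_all add: hd_rev last_rev)
  have "g e (1/2) \<in> cycle_image g esP"
    using edge_midpoint(1)[of e] e simple_walkD(3)[OF chord] unfolding cycle_image_def by blast
  then have "cycle_image g esP \<inter> inside (cycle_image g esA \<union> cycle_image g (rev esB)) \<noteq> {}"
    using chord_midpoint_inside[OF e] split_images(1) by auto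
  note theta = walk_theta_inside[OF arcs(1) simple_walk_rev[OF arcs(2)] chord arcs(3) ne chord_nonempty
      arcs(9) rB(1) refl arcs(6) rB(2) refl _ arcs_meet_chord(3) _ _ arcs_meet_chord(1) _ this]
  show "cycle_inside es1 \<inter> cycle_inside es2 = {}"
    "cycle_inside es = cycle_inside es1 \<union> cycle_inside es2 \<union> (cycle_image g esP - {pos (hd vsP), pos (last vsP)})"
    using theta arcs(5,10) arcs_meet_chord(2,4) unfolding split_images by (auto simp: Int_commute)
qed

lemma chord_inner_props:
  "chord_inner \<subseteq> V" "chord_inner \<inter> set vs = {}" "finite chord_inner"
  "card chord_inner = length esP - 1"
  "v \<in> chord_inner \<Longrightarrow> pos v \<in> cycle_image g esP - {pos (hd vsP), pos (last vsP)}"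
proof -
  show V: "chord_inner \<subseteq> V"
    using simple_walk_vertices_subset[OF chord chord_nonempty] unfolding chord_inner_def by blast
  show "chord_inner \<inter> set vs = {}" using chord_vertices unfolding chord_inner_def by blast
  show "finite chord_inner" unfolding chord_inner_def by simp
  have "vsP \<noteq> []" using chord by (auto simp: simple_walk_def)
  then have "{hd vsP, last vsP} \<subseteq> set vsP" by simp
  moreover have "card (set vsP) = Suc (length esP)"
    using chord by (simp add: simple_walk_def distinct_card)
  ultimately show "card chord_inner = length esP - 1"
    unfolding chord_inner_def using chord_ends(1) by (simp add: card_Diff_subset)
  assume v: "v \<in> chord_inner"
  then have "v \<in> V" "v \<in> set vsP" "v \<noteq> hd vsP" "v \<noteq> last vsP" using V unfolding chord_inner_def by auto
  then show "pos v \<in> cycle_image g esP - {pos (hd vsP), pos (last vsP)}"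
    using pos_in_walk_image_iff[OF chord chord_nonempty] chord_ends(2,3) inj_pos
    by (auto dest: inj_onD)
qed

lemma cilium_inside_split_iff:
  assumes "v \<in> V"
  shows "cil v \<in> cycle_inside es \<longleftrightarrow> cil v \<in> cycle_inside es1 \<or> cil v \<in> cycle_inside es2"
proof -
  have "cycle_image g esP \<subseteq> G"
    using edge_subset_drawing simple_walkD(3)[OF chord] unfolding cycle_image_def by blast
  then have "cil v \<notin> cycle_image g esP" using cilium_notin_drawing[OF cilia assms] by blast
  then show ?thesis using split_interiors(2) by blast
qed

lemma even_cilia_split:
  "card {v\<in>set vs1. even (n v) \<and> cil v \<in> cycle_inside es1}
     + card {v\<in>set vs2. even (n v) \<and> cil v \<in> cycle_inside es2}
   = card {v\<in>set vs. even (n v) \<and> cil v \<in> cycle_inside es} + card {v\<in>chord_inner. even (n v)}"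
proof -
  define S1 where "S1 = {v\<in>set vs1. even (n v) \<and> cil v \<in> cycle_inside es1}"
  define S2 where "S2 = {v\<in>set vs2. even (n v) \<and> cil v \<in> cycle_inside es2}"
  define S where "S = {v\<in>set vs. even (n v) \<and> cil v \<in> cycle_inside es}"
  define T where "T = {v\<in>chord_inner. even (n v)}"
  have sub: "cycle_inside es1 \<subseteq> cycle_inside es" "cycle_inside es2 \<subseteq> cycle_inside es"
    using split_interiors(2) by blast+
  have ends: "hd vsP \<in> set vs" "last vsP \<in> set vs" using chord_vertices by blast+
  have "S1 \<union> S2 \<subseteq> S \<union> T"
    using sub ends split_vertices arcs(12) unfolding S1_def S2_def S_def T_def chord_inner_def by blast
  moreover have "S \<subseteq> S1 \<union> S2"
  proof
    fix v assume v: "v \<in> S"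
    then have "v \<in> V" using simple_cycle_vertices_subset[OF cycle] unfolding S_def by blast
    then show "v \<in> S1 \<union> S2"
      using v cilium_inside_split_iff sub
        cilium_outside_inner_cycle[OF cycle split_cycles(1) sub(1), of v]
        cilium_outside_inner_cycle[OF cycle split_cycles(2) sub(2), of v]
      unfolding S_def S1_def S2_def by blast
  qed
  moreover have "T \<subseteq> S1 \<union> S2"
  proof
    fix v assume v: "v \<in> T"
    then have vV: "v \<in> V" and pv: "pos v \<in> cycle_inside es"
      using chord_inner_props(1,5) chord_inside unfolding T_def by blast+
    then have "pos v \<notin> cycle_image g es" using inside_no_overlap by blast
    then have "cil v \<in> cycle_inside es"
      using cilium_inside_iff[OF cilia vV cycle_image_subset_drawing[OF cycle]] pv by blast
    moreover have "v \<in> set vs1" "v \<in> set vs2"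
      using v split_vertices unfolding T_def chord_inner_def by blast+
    ultimately show "v \<in> S1 \<union> S2"
      using v cilium_inside_split_iff[OF vV] unfolding T_def S1_def S2_def by blast
  qed
  ultimately have "S1 \<union> S2 = S \<union> T" by blast
  moreover have "S1 \<inter> S2 = {}" using split_interiors(1) unfolding S1_def S2_def by blast
  moreover have "S \<inter> T = {}" using chord_inner_props(2) unfolding S_def T_def by blast
  moreover have "finite S1" "finite S2" "finite S" "finite T"
    using chord_inner_props(3) unfolding S1_def S2_def S_def T_def by simp_all
  ultimately show ?thesis unfolding S1_def[symmetric] S2_def[symmetric] S_def[symmetric] T_def[symmetric]
    by (metis card_Un_disjoint)
qed

lemma interior_vertices_split:
  "(\<Sum>v\<in>{v\<in>V. pos v \<in> cycle_inside es}. n v)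
   = (\<Sum>v\<in>{v\<in>V. pos v \<in> cycle_inside es1}. n v) + (\<Sum>v\<in>{v\<in>V. pos v \<in> cycle_inside es2}. n v)
     + (\<Sum>v\<in>chord_inner. n v)"
proof -
  define N1 where "N1 = {v\<in>V. pos v \<in> cycle_inside es1}"
  define N2 where "N2 = {v\<in>V. pos v \<in> cycle_inside es2}"
  have "v \<in> chord_inner"
    if "v \<in> V" "pos v \<in> cycle_image g esP - {pos (hd vsP), pos (last vsP)}" for v
    using that pos_in_walk_image_iff[OF chord chord_nonempty] unfolding chord_inner_def by auto
  then have split: "{v\<in>V. pos v \<in> cycle_inside es} = N1 \<union> N2 \<union> chord_inner"
    using split_interiors(2) chord_inner_props(1,5) unfolding N1_def N2_def by blast
  have "N1 \<inter> N2 = {}" using split_interiors(1) unfolding N1_def N2_def by blast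
  moreover have "(N1 \<union> N2) \<inter> chord_inner = {}"
    using chord_inner_props(5) inside_no_overlap split_images(2,3) unfolding N1_def N2_def by blast
  moreover have "finite N1" "finite N2" using finite_vertices unfolding N1_def N2_def by simp_all
  ultimately show ?thesis unfolding split N1_def[symmetric] N2_def[symmetric]
    using chord_inner_props(3) by (simp add: sum.union_disjoint)
qed

lemma sign_prod_split: "(\<Prod>e\<in>set es. \<epsilon> e) = (\<Prod>e\<in>set es1. \<epsilon> e) * (\<Prod>e\<in>set es2. \<epsilon> e)"
proof -
  have "(\<Prod>e\<in>set es1. \<epsilon> e) * (\<Prod>e\<in>set es2. \<epsilon> e)
        = (\<Prod>e\<in>set esA. \<epsilon> e) * (\<Prod>e\<in>set esB. \<epsilon> e) * ((\<Prod>e\<in>set esP. \<epsilon> e) * (\<Prod>e\<in>set esP. \<epsilon> e))"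
    using arcs_meet_chord(3,4) unfolding es1_def es2_def
    by (simp add: prod.union_disjoint Int_commute algebra_simps)
  also have "\<dots> = (\<Prod>e\<in>set es. \<epsilon> e)"
    using sign_prod_square[OF simple_walkD(3)[OF chord]] arcs(5,11)
    by (metis mult.right_neutral prod.union_disjoint finite_set)
  finally show ?thesis by simp
qed

lemma interior_edges_split: "interior_edges es1 < interior_edges es" "interior_edges es2 < interior_edges es"
proof -
  obtain e where e: "e \<in> set esP" using chord_nonempty by (cases esP) auto
  have eE: "e \<in> E" using e simple_walkD(3)[OF chord] by blast
  have "path_image (g e) \<inter> cycle_inside es \<noteq> {}"
    using chord_midpoint_inside[OF e] edge_midpoint(1)[OF eE] by blast
  moreover have "path_image (g e) \<subseteq> cycle_image g es1" "path_image (g e) \<subseteq> cycle_image g es2"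
    using e split_images(2,3) unfolding cycle_image_def by blast+
  ultimately show "interior_edges es1 < interior_edges es" "interior_edges es2 < interior_edges es"
    using interior_edges_less[OF _ eE] split_interiors(2) by blast+
qed

lemma cycle_sign_law_split:
  assumes law1: "cycle_sign_law vs1 es1" and law2: "cycle_sign_law vs2 es2"
  shows "cycle_sign_law vs es"
proof -
  define k where "k xs ys = card {v\<in>set xs. even (n v) \<and> cil v \<in> cycle_inside ys}" for xs ys
  define N where "N ys = (\<Sum>v\<in>{v\<in>V. pos v \<in> cycle_inside ys}. n v)" for ys
  have len: "length es1 = length esA + length esP" "length es2 = length esP + length esB"
    "length es = length esA + length esB"
    using split_index unfolding es1_def es2_def esA_def esB_def by simp_all
  have ev: "even (length es)" "even (length es1)" "even (length es2)"
    using even_cycle_length[OF cycle] even_cycle_length[OF split_cycles(1)]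
      even_cycle_length[OF split_cycles(2)] by simp_all
  have par: "even (card {v\<in>chord_inner. even (n v)} + (\<Sum>v\<in>chord_inner. n v) + card chord_inner)"
    by (rule even_card_even_plus_sum_plus_card[OF chord_inner_props(3)])
  have "length esP \<ge> 1" using chord_nonempty by (cases esP) auto
  then have "even ((length es1 div 2 + 1 + k vs1 es1 + N es1) + (length es2 div 2 + 1 + k vs2 es2 + N es2)
                 + (length es div 2 + 1 + k vs es + N es))"
    using even_cilia_split[folded k_def] interior_vertices_split[folded N_def] chord_inner_props(4) len ev par
    by (intro exponent_parity_split)
  then have "(-1::int) ^ (length es1 div 2 + 1 + k vs1 es1 + N es1) * (-1) ^ (length es2 div 2 + 1 + k vs2 es2 + N es2)
             = (-1) ^ (length es div 2 + 1 + k vs es + N es)"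
    unfolding power_add[symmetric] by (rule minus_one_power_eq)
  then show ?thesis
    using law1 law2 sign_prod_split unfolding cycle_sign_law_def k_def N_def by simp
qed
end


context kasteleyn_graph
begin

lemma cycle_sign_law_chord_step:
  assumes cycle: "simple_cycle E bl wh vs es"
    and chord: "simple_walk E bl wh vsP esP" "esP \<noteq> []"
    and disjoint: "set esP \<inter> set es = {}" "set vsP \<inter> set vs = {hd vsP, last vsP}"
    and inside: "cycle_image g esP - {pos (hd vsP), pos (last vsP)} \<subseteq> cycle_inside es"
    and start: "hd vsP = hd vs"
  obtains vs1 es1 vs2 es2 where "simple_cycle E bl wh vs1 es1" "simple_cycle E bl wh vs2 es2"
    "interior_edges es1 < interior_edges es" "interior_edges es2 < interior_edges es"
    "cycle_sign_law vs1 es1 \<Longrightarrow> cycle_sign_law vs2 es2 \<Longrightarrow> cycle_sign_law vs es"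
proof -
  have "vsP \<noteq> []" using chord(1) by (auto simp: simple_walk_def)
  then have "last vsP \<in> set vs" using disjoint(2) by auto
  then obtain b where b: "b < length vs" "last vsP = vs ! b" by (auto simp: in_set_conv_nth)
  have b_pos: "0 < b"
    using b start simple_walk_hd_neq_last[OF chord] by (cases b) (auto simp: hd_conv_nth)
  have b_less: "b < length es" using b(1) cycle by (simp add: simple_cycle_def)
  have split: "chord_split B W E bl wh pos g n cil \<epsilon> vs vsP es esP b"
    by (intro chord_split.intro chord_split_axioms.intro kasteleyn_graph_axioms)
      (fact cycle chord disjoint inside start b_pos b_less b(2))+
  show ?thesis
    by (rule that[OF chord_split.split_cycles[OF split] chord_split.interior_edges_split[OF split]])
      (rule chord_split.cycle_sign_law_split[OF split])
qed

lemma cycle_sign_law_cong: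
  assumes "set vs' = set vs" "set es' = set es" "length es' = length es"
  shows "cycle_sign_law vs' es' \<longleftrightarrow> cycle_sign_law vs es"
  using assms unfolding cycle_sign_law_def cycle_image_def by simp

lemma cycle_sign_law_holds:
  assumes "simple_cycle E bl wh vs es"
  shows "cycle_sign_law vs es"
  using assms
proof (induction "interior_edges es" arbitrary: vs es rule: less_induct)
  case less
  show ?case
  proof (cases "cycle_inside es \<inter> G = {}")
    case True
    then show ?thesis by (rule cycle_sign_law_empty_interior[OF less.prems])
  next
    case False
    obtain vsP esP where chord: "simple_walk E bl wh vsP esP" "esP \<noteq> []"
      and disjoint: "set esP \<inter> set es = {}" "set vsP \<inter> set vs = {hd vsP, last vsP}"
      and inside: "cycle_image g esP - {pos (hd vsP), pos (last vsP)} \<subseteq> cycle_inside es"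
      by (rule inner_chord_exists[OF less.prems False])
    have "vsP \<noteq> []" using chord(1) by (auto simp: simple_walk_def)
    then obtain a where a: "a < length vs" "vs ! a = hd vsP"
      using disjoint(2) by (metis IntE insertI1 in_set_conv_nth)
    have "a < length es" using a(1) less.prems by (simp add: simple_cycle_def)
    then obtain vs' es' where c': "simple_cycle E bl wh vs' es'" and sv: "set vs' = set vs"
      and se: "set es' = set es" and le: "length es' = length es" and hd': "hd vs' = hd vsP"
      by (rule simple_cycle_rotate_start[OF less.prems]) (simp add: a(2))
    have img: "cycle_image g es' = cycle_image g es" using se by (simp add: cycle_image_def)
    have same: "interior_edges es' = interior_edges es" unfolding interior_edges_def img ..
    obtain vs1 es1 vs2 es2 where "simple_cycle E bl wh vs1 es1" "simple_cycle E bl wh vs2 es2"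
      "interior_edges es1 < interior_edges es'" "interior_edges es2 < interior_edges es'"
      "cycle_sign_law vs1 es1 \<Longrightarrow> cycle_sign_law vs2 es2 \<Longrightarrow> cycle_sign_law vs' es'"
      by (rule cycle_sign_law_chord_step[OF c' chord])
        (use disjoint inside sv se img hd' in auto)
    then have "cycle_sign_law vs' es'" using less.hyps same by auto
    then show ?thesis using cycle_sign_law_cong[OF sv se le] by blast
  qed
qed

end

theorem lemma1:
  fixes B W :: "'v set" and E :: "'e set" and bl wh :: "'e \<Rightarrow> 'v"
    and pos :: "'v \<Rightarrow> complex" and g :: "'e \<Rightarrow> real \<Rightarrow> complex"
    and n :: "'v \<Rightarrow> nat" and cil :: "'v \<Rightarrow> complex" and \<epsilon> :: "'e \<Rightarrow> int"
    and vs :: "'v list" and es :: "'e list"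
  assumes "plane_bipartite_graph B W E bl wh pos g"
    and "bounded_faces_simple B W E bl wh pos g"
    and "\<forall>v\<in>B \<union> W. n v > 0"
    and "valid_cilia (B \<union> W) E pos g cil"
    and "kasteleyn (B \<union> W) E pos g n cil \<epsilon>"
    and "simple_cycle E bl wh vs es"
  shows "(\<Prod>e\<in>set es. \<epsilon> e) =
           (-1) ^ (length es div 2 + 1
                   + card {v\<in>set vs. even (n v) \<and> cil v \<in> inside (cycle_image g es)}
                   + (\<Sum>v\<in>{v\<in>B \<union> W. pos v \<in> inside (cycle_image g es)}. n v))"
proof -
  interpret kasteleyn_graph B W E bl wh pos g n cil \<epsilon>
    by unfold_locales (fact assms)+
  show ?thesis using cycle_sign_law_holds[OF assms(6)] unfolding cycle_sign_law_def .
qed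

end
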